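(* Let $R$ be a subring of $\mathbb{Q}$, let $\Phi$ be a set of finite-rank-free-by-1 $R$-modules, and let $G$ be a torsion-free $R$-module with nucleus $R$ which is both $\Phi$-complete and $\Phi$-represented. Then $G$ is a splitter, i.e. $\mathrm{Ext}(G,G)=0$.
   Context: For a torsion-free group $X\neq0$, $\mathrm{nuc}\,X$ is the largest subring of $\mathbb{Q}$ over which $X$ is a module. Let $n\le\omega$. Let $B$ be the free $R$-module with basis $\{x_i:i<n\}\cup\{y_m:m\in\omega\}$, let $p_m\in R\setminus\{0\}$ and $k_{im}\in R$ with, for each $m$, $k_{im}=0$ for all but finitely many $i$, and let $N$ be the submodule generated by $y_{m+1}p_m-y_m-\sum_{i<n}x_ik_{im}$ $(m\in\omega)$. An $R$-module $G'$ is $n$-free-by-1 if $G'\cong B/N$ for such data, $G'$ is not free, and, if $n$ is finite, every $R$-submodule of $G'$ of rank $\le n$ is free; it is finite-rank-free-by-1 if it is $n$-free-by-1 for some finite $n$. $G$ is $\Phi$-complete if $\mathrm{Ext}(G',G)=0$ for all $G'\in\Phi$. $G$ is $\Phi$-represented if $G=\bigcup_{\alpha<\lambda}G_\alpha$ for an ascending continuous chain of $R$-submodules with $G_0=0$ and each $G_{\alpha+1}/G_\alpha$ isomorphic to a member of $\Phi$ or to a free $R$-module. *)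

theory Defs
  imports "HOL-Algebra.Algebra" "HOL-Library.Extended_Nat"
begin

definition Qring :: "rat set \<Rightarrow> rat ring" where
  "Qring S = \<lparr>carrier = S, monoid.mult = (*), one = 1, ring.zero = 0, ring.add = (+)\<rparr>"

definition subring_of_Q :: "rat set \<Rightarrow> bool" where
  "subring_of_Q S \<longleftrightarrow> subring S (Qring UNIV)"

definition R_module :: "rat set \<Rightarrow> (rat, 'a) module \<Rightarrow> bool" where
  "R_module R M \<longleftrightarrow> module (Qring R) M"

definition module_over :: "rat set \<Rightarrow> (rat, 'a) module \<Rightarrow> bool" where
  "module_over S M \<longleftrightarrow> (\<exists>sm. module (Qring S) (M\<lparr>smult := sm\<rparr>))"

definition nuc :: "(rat, 'a) module \<Rightarrow> rat set" where
  "nuc M = (THE S. subring_of_Q S \<and> module_over S M \<and>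
                   (\<forall>S'. subring_of_Q S' \<and> module_over S' M \<longrightarrow> S' \<subseteq> S))"

definition torsion_free :: "(rat, 'a) module \<Rightarrow> bool" where
  "torsion_free M \<longleftrightarrow>
     (\<forall>x\<in>carrier M. \<forall>n::int. n \<noteq> 0 \<and> add_pow M n x = \<zero>\<^bsub>M\<^esub> \<longrightarrow> x = \<zero>\<^bsub>M\<^esub>)"

definition lin_indep :: "rat set \<Rightarrow> (rat, 'a) module \<Rightarrow> 'i set \<Rightarrow> ('i \<Rightarrow> 'a) \<Rightarrow> bool" where
  "lin_indep R M I v \<longleftrightarrow>
     (\<forall>F c. finite F \<and> F \<subseteq> I \<and> c ` F \<subseteq> R \<and>
        finsum M (\<lambda>i. c i \<odot>\<^bsub>M\<^esub> v i) F = \<zero>\<^bsub>M\<^esub> \<longrightarrow> (\<forall>i\<in>F. c i = 0))"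

definition R_spans :: "rat set \<Rightarrow> (rat, 'a) module \<Rightarrow> 'a set \<Rightarrow> bool" where
  "R_spans R M W \<longleftrightarrow>
     (\<forall>y\<in>carrier M. \<exists>F c. finite F \<and> F \<subseteq> W \<and> c ` F \<subseteq> R \<and>
        y = finsum M (\<lambda>u. c u \<odot>\<^bsub>M\<^esub> u) F)"

definition free_R_module :: "rat set \<Rightarrow> (rat, 'a) module \<Rightarrow> bool" where
  "free_R_module R M \<longleftrightarrow> R_module R M \<and>
     (\<exists>W \<subseteq> carrier M. lin_indep R M W id \<and> R_spans R M W)"

definition rank_le :: "rat set \<Rightarrow> (rat, 'a) module \<Rightarrow> nat \<Rightarrow> bool" where
  "rank_le R M n \<longleftrightarrow>
     (\<forall>W \<subseteq> carrier M. lin_indep R M W id \<longrightarrow> finite W \<and> card W \<le> n)"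

text \<open>Presentation data: basis x_i (i<n) = Inl i and y_m = Inr m of the free module B,
  whose elements are finitely supported R-valued coefficient functions.\<close>
definition basis_idx :: "enat \<Rightarrow> (nat + nat) set" where
  "basis_idx n = Inl ` {i. enat i < n} \<union> Inr ` UNIV"

definition free_B :: "rat set \<Rightarrow> enat \<Rightarrow> (nat + nat \<Rightarrow> rat) set" where
  "free_B R n = {c. finite {j. c j \<noteq> 0} \<and> {j. c j \<noteq> 0} \<subseteq> basis_idx n \<and> range c \<subseteq> R}"

text \<open>The relation y_{m+1} p_m - y_m - sum_{i<n} x_i k_{im}, as an element of B.\<close>
definition rel_vec :: "enat \<Rightarrow> (nat \<Rightarrow> rat) \<Rightarrow> (nat \<Rightarrow> nat \<Rightarrow> rat) \<Rightarrow> nat \<Rightarrow> (nat + nat \<Rightarrow> rat)" where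
  "rel_vec n p k m = (\<lambda>j. case j of
      Inr m' \<Rightarrow> (if m' = Suc m then p m else 0) - (if m' = m then 1 else 0)
    | Inl i \<Rightarrow> (if enat i < n then - k i m else 0))"

definition rel_submod :: "rat set \<Rightarrow> enat \<Rightarrow> (nat \<Rightarrow> rat) \<Rightarrow> (nat \<Rightarrow> nat \<Rightarrow> rat) \<Rightarrow> (nat + nat \<Rightarrow> rat) set" where
  "rel_submod R n p k = {(\<lambda>j. \<Sum>m\<in>F. a m * rel_vec n p k m j) | F a. finite F \<and> a ` F \<subseteq> R}"

text \<open>G' is isomorphic to B/N: the R-linear map B \<rightarrow> G' sending the basis to x, y
  is surjective with kernel N.\<close>
definition presented_by :: "rat set \<Rightarrow> enat \<Rightarrow> (rat, 'c) module \<Rightarrow> (nat \<Rightarrow> 'c) \<Rightarrow> (nat \<Rightarrow> 'c)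
    \<Rightarrow> (nat \<Rightarrow> rat) \<Rightarrow> (nat \<Rightarrow> nat \<Rightarrow> rat) \<Rightarrow> bool" where
  "presented_by R n M x y p k \<longleftrightarrow>
     (let e = (\<lambda>j. case j of Inl i \<Rightarrow> x i | Inr m \<Rightarrow> y m);
          \<phi> = (\<lambda>c. finsum M (\<lambda>j. c j \<odot>\<^bsub>M\<^esub> e j) {j. c j \<noteq> 0})
      in (\<forall>i. enat i < n \<longrightarrow> x i \<in> carrier M) \<and> (\<forall>m. y m \<in> carrier M) \<and>
         \<phi> ` free_B R n = carrier M \<and>
         (\<forall>c\<in>free_B R n. \<phi> c = \<zero>\<^bsub>M\<^esub> \<longleftrightarrow> c \<in> rel_submod R n p k))"

definition n_free_by_1 :: "rat set \<Rightarrow> enat \<Rightarrow> (rat, 'c) module \<Rightarrow> bool" where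
  "n_free_by_1 R n M \<longleftrightarrow> R_module R M \<and>
     (\<exists>x y p k. (\<forall>m. p m \<in> R \<and> p m \<noteq> 0) \<and> (\<forall>i m. k i m \<in> R) \<and>
        (\<forall>m. finite {i. enat i < n \<and> k i m \<noteq> 0}) \<and>
        presented_by R n M x y p k) \<and>
     \<not> free_R_module R M \<and>
     (\<forall>n'. n = enat n' \<longrightarrow>
        (\<forall>H. submodule H (Qring R) M \<and> rank_le R (M\<lparr>carrier := H\<rparr>) n'
              \<longrightarrow> free_R_module R (M\<lparr>carrier := H\<rparr>)))"

definition finite_rank_free_by_1 :: "rat set \<Rightarrow> (rat, 'c) module \<Rightarrow> bool" where
  "finite_rank_free_by_1 R M \<longleftrightarrow> (\<exists>n::nat. n_free_by_1 R (enat n) M)"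

definition add_hom :: "('a, 'm) ring_scheme \<Rightarrow> ('b, 'n) ring_scheme \<Rightarrow> ('a \<Rightarrow> 'b) \<Rightarrow> bool" where
  "add_hom W Y f \<longleftrightarrow> f \<in> carrier W \<rightarrow> carrier Y \<and>
     (\<forall>u\<in>carrier W. \<forall>v\<in>carrier W. f (u \<oplus>\<^bsub>W\<^esub> v) = f u \<oplus>\<^bsub>Y\<^esub> f v)"

text \<open>Every extension is isomorphic to one whose underlying set is B \<times> A, so it suffices
  to let E range over abelian groups with carrier a subset of 'b \<times> 'a.\<close>
definition Ext_zero :: "(rat, 'a) module \<Rightarrow> (rat, 'b) module \<Rightarrow> bool" where
  "Ext_zero A B \<longleftrightarrow>
     (\<forall>(E :: ('b \<times> 'a) ring) i \<pi>.
        abelian_group E \<and> add_hom B E i \<and> inj_on i (carrier B) \<and>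
        add_hom E A \<pi> \<and> \<pi> ` carrier E = carrier A \<and>
        {e \<in> carrier E. \<pi> e = \<zero>\<^bsub>A\<^esub>} = i ` carrier B
        \<longrightarrow> (\<exists>s. add_hom A E s \<and> (\<forall>a\<in>carrier A. \<pi> (s a) = a)))"

definition splitter :: "(rat, 'a) module \<Rightarrow> bool" where
  "splitter G \<longleftrightarrow> Ext_zero G G"

definition Phi_complete :: "(rat, 'c) module set \<Rightarrow> (rat, 'a) module \<Rightarrow> bool" where
  "Phi_complete \<Phi> G \<longleftrightarrow> (\<forall>G'\<in>\<Phi>. Ext_zero G' G)"

definition quot_mod :: "(rat, 'a) module \<Rightarrow> 'a set \<Rightarrow> 'a set \<Rightarrow> (rat, 'a set) module" where
  "quot_mod M H K = \<lparr>carrier = (\<lambda>a. K +>\<^bsub>M\<^esub> a) ` H,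
      monoid.mult = (\<lambda>W Y. K), one = K, ring.zero = K,
      ring.add = (\<lambda>W Y. W <+>\<^bsub>M\<^esub> Y),
      module.smult = (\<lambda>r W. K +>\<^bsub>M\<^esub> (r \<odot>\<^bsub>M\<^esub> (SOME x. x \<in> W)))\<rparr>"

definition R_iso :: "rat set \<Rightarrow> (rat, 'a) module \<Rightarrow> (rat, 'b) module \<Rightarrow> bool" where
  "R_iso R M1 M2 \<longleftrightarrow> (\<exists>f. bij_betw f (carrier M1) (carrier M2) \<and> add_hom M1 M2 f \<and>
     (\<forall>r\<in>R. \<forall>u\<in>carrier M1. f (r \<odot>\<^bsub>M1\<^esub> u) = r \<odot>\<^bsub>M2\<^esub> f u))"

text \<open>G = union of an ascending continuous chain (G_alpha) indexed by the well-order r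
  (i.e. by the ordinals below lambda = ordertype of r), G_0 = 0, and every
  G_{alpha+1}/G_alpha isomorphic to a member of Phi or free.\<close>
definition Phi_represented :: "rat set \<Rightarrow> (rat, 'c) module set \<Rightarrow> (rat, 'a) module
    \<Rightarrow> ('i \<times> 'i) set \<Rightarrow> ('i \<Rightarrow> 'a set) \<Rightarrow> bool" where
  "Phi_represented R \<Phi> G r C \<longleftrightarrow>
     (let I = Field r; lt = (\<lambda>a b. (a, b) \<in> r \<and> a \<noteq> b) in
      Well_order r \<and>
      (\<forall>\<alpha>\<in>I. submodule (C \<alpha>) (Qring R) G) \<and>
      (\<forall>\<alpha>\<in>I. \<forall>\<beta>\<in>I. (\<alpha>, \<beta>) \<in> r \<longrightarrow> C \<alpha> \<subseteq> C \<beta>) \<and>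
      (\<forall>\<alpha>\<in>I. (\<forall>\<beta>\<in>I. (\<alpha>, \<beta>) \<in> r) \<longrightarrow> C \<alpha> = {\<zero>\<^bsub>G\<^esub>}) \<and>
      (\<forall>\<alpha>\<in>I. (\<exists>\<beta>\<in>I. lt \<beta> \<alpha>) \<and> (\<forall>\<beta>\<in>I. lt \<beta> \<alpha> \<longrightarrow> (\<exists>\<gamma>\<in>I. lt \<beta> \<gamma> \<and> lt \<gamma> \<alpha>))
          \<longrightarrow> C \<alpha> = (\<Union>\<beta>\<in>{\<beta>\<in>I. lt \<beta> \<alpha>}. C \<beta>)) \<and>
      (\<forall>\<alpha>\<in>I. \<forall>\<beta>\<in>I. lt \<alpha> \<beta> \<and> (\<forall>\<gamma>\<in>I. lt \<alpha> \<gamma> \<longrightarrow> (\<beta>, \<gamma>) \<in> r)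
          \<longrightarrow> (\<exists>G'\<in>\<Phi>. R_iso R (quot_mod G (C \<beta>) (C \<alpha>)) G') \<or>
              free_R_module R (quot_mod G (C \<beta>) (C \<alpha>))) \<and>
      (\<Union>\<alpha>\<in>I. C \<alpha>) = carrier G)"

end

(*
  Eklof's lemma: if G is the union of a continuous well-ordered chain G_alpha starting at 0 and
  Ext(G_(alpha+1)/G_alpha, X) = 0 for all alpha, then Ext(G, X) = 0. A splitting of an extension
  pi : E -> G is built by transfinite extension of partial splittings over the G_alpha (via Zorn);
  at a successor step, pi^-1(G_(alpha+1)) / s(G_alpha) is an extension of G_(alpha+1)/G_alpha by X,
  whose splitting corrects a lift of G_(alpha+1).
  For X = G the successive quotients are in Phi, handled by Phi-completeness, or free R-modules.
  Ext(F, G) = 0 for a free R-module F holds because G, and hence every extension of F by G, is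
  uniquely divisible by the denominators occurring in R: then R acts on the extension and a lift
  of a basis extends R-linearly.
*)
theory Submission
  imports Defs
begin

lemma (in abelian_group) minus_add_cancel:
  "x \<in> carrier G \<Longrightarrow> y \<in> carrier G \<Longrightarrow> (x \<ominus> y) \<oplus> y = x"
  by (simp add: a_minus_def a_assoc l_neg)

lemma (in abelian_group) add_minus_cancel:
  "x \<in> carrier G \<Longrightarrow> y \<in> carrier G \<Longrightarrow> x \<oplus> (y \<ominus> x) = y"
  using minus_add_cancel by (simp add: a_comm)

lemma (in abelian_group) add_minus_cancel_left:
  "x \<in> carrier G \<Longrightarrow> y \<in> carrier G \<Longrightarrow> (x \<oplus> y) \<ominus> x = y"
  by (metis a_closed a_comm a_inv_closed a_minus_def r_neg1)

lemma add_hom_abelian_group_hom: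
  assumes "abelian_group A" "abelian_group B" "add_hom A B f"
  shows "abelian_group_hom A B f"
proof -
  interpret A: abelian_group A by fact
  interpret B: abelian_group B by fact
  show ?thesis
    using assms(3) A.a_group B.a_group
    by (intro abelian_group_homI assms(1,2))
      (auto simp: group_hom_def group_hom_axioms_def hom_def add_hom_def)
qed

lemma add_hom_zero:
  assumes "abelian_group A" "abelian_group B" "add_hom A B f"
  shows "f \<zero>\<^bsub>A\<^esub> = \<zero>\<^bsub>B\<^esub>"
  using abelian_group_hom.hom_zero[OF add_hom_abelian_group_hom[OF assms]] .

lemma add_hom_int_pow:
  assumes "abelian_group A" "abelian_group B" "add_hom A B f" "x \<in> carrier A"
  shows "f (add_pow A (n::int) x) = add_pow B n (f x)"
  using group_hom.hom_int_pow[OF abelian_group_hom.a_group_hom[OF add_hom_abelian_group_hom[OF assms(1-3)]]] assms(4)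
  by (simp add: add_pow_def)

lemma add_hom_finsum:
  assumes "abelian_group A" "abelian_group B" "add_hom A B f"
    and "finite V" "g \<in> V \<rightarrow> carrier A"
  shows "f (finsum A g V) = finsum B (\<lambda>x. f (g x)) V"
proof -
  interpret A: abelian_group A by fact
  interpret B: abelian_group B by fact
  interpret abelian_group_hom A B f by (rule add_hom_abelian_group_hom[OF assms(1-3)])
  show ?thesis
    using assms(4,5)
  proof (induction V rule: finite_induct)
    case (insert x V)
    then have "g \<in> V \<rightarrow> carrier A" "g x \<in> carrier A" by auto
    with insert show ?case by (simp add: A.finsum_insert B.finsum_insert Pi_iff)
  qed simp
qed

lemma additive_subgroup_iff:
  "additive_subgroup H G \<longleftrightarrow> H \<subseteq> carrier G \<and> \<zero>\<^bsub>G\<^esub> \<in> H \<and>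
     (\<forall>x\<in>H. \<forall>y\<in>H. x \<oplus>\<^bsub>G\<^esub> y \<in> H) \<and> (\<forall>x\<in>H. \<ominus>\<^bsub>G\<^esub> x \<in> H)"
  by (auto simp: additive_subgroup_def subgroup_def a_inv_def)

definition extension ::
    "('b, 'n) ring_scheme \<Rightarrow> ('e, 'm) ring_scheme \<Rightarrow> ('a, 'g) ring_scheme \<Rightarrow> ('b \<Rightarrow> 'e) \<Rightarrow> ('e \<Rightarrow> 'a) \<Rightarrow> bool"
  where
  "extension B E A i \<pi> \<longleftrightarrow> abelian_group E \<and> add_hom B E i \<and> inj_on i (carrier B) \<and>
     add_hom E A \<pi> \<and> \<pi> ` carrier E = carrier A \<and> {e \<in> carrier E. \<pi> e = \<zero>\<^bsub>A\<^esub>} = i ` carrier B"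

lemma Ext_zero_iff:
  fixes A :: "(rat, 'a) module" and B :: "(rat, 'b) module"
  shows "Ext_zero A B \<longleftrightarrow> (\<forall>(E :: ('b \<times> 'a) ring) i \<pi>. extension B E A i \<pi> \<longrightarrow>
     (\<exists>s. add_hom A E s \<and> (\<forall>a\<in>carrier A. \<pi> (s a) = a)))"
  by (simp add: Ext_zero_def extension_def)

definition partial_section ::
    "('a, 'g) ring_scheme \<Rightarrow> ('e, 'm) ring_scheme \<Rightarrow> ('e \<Rightarrow> 'a) \<Rightarrow> 'a set \<Rightarrow> ('a \<Rightarrow> 'e) \<Rightarrow> bool" where
  "partial_section G E \<pi> D s \<longleftrightarrow> (\<forall>h\<in>D. s h \<in> carrier E \<and> \<pi> (s h) = h) \<and>
     (\<forall>u\<in>D. \<forall>v\<in>D. s (u \<oplus>\<^bsub>G\<^esub> v) = s u \<oplus>\<^bsub>E\<^esub> s v)"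

lemma partial_section_zero:
  assumes "abelian_group G" "abelian_group E" "additive_subgroup D G" "partial_section G E \<pi> D s"
  shows "s \<zero>\<^bsub>G\<^esub> = \<zero>\<^bsub>E\<^esub>"
proof -
  interpret G: abelian_group G by fact
  interpret E: abelian_group E by fact
  have "\<zero>\<^bsub>G\<^esub> \<in> D" using assms(3) by (rule additive_subgroup.zero_closed)
  then have "s (\<zero>\<^bsub>G\<^esub> \<oplus>\<^bsub>G\<^esub> \<zero>\<^bsub>G\<^esub>) = s \<zero>\<^bsub>G\<^esub> \<oplus>\<^bsub>E\<^esub> s \<zero>\<^bsub>G\<^esub>" "s \<zero>\<^bsub>G\<^esub> \<in> carrier E"
    using assms(4) unfolding partial_section_def by blast+
  then show ?thesis by (metis G.l_zero G.zero_closed E.l_zero E.zero_closed E.add.right_cancel)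
qed

lemma partial_section_neg:
  assumes "abelian_group G" "abelian_group E" "additive_subgroup D G" "partial_section G E \<pi> D s"
    and "k \<in> D"
  shows "s (\<ominus>\<^bsub>G\<^esub> k) = \<ominus>\<^bsub>E\<^esub> s k"
proof -
  interpret G: abelian_group G by fact
  interpret E: abelian_group E by fact
  interpret D: additive_subgroup D G by fact
  have k: "k \<in> carrier G" "\<ominus>\<^bsub>G\<^esub> k \<in> D" using assms(5) D.a_subset by auto
  then have "s (\<ominus>\<^bsub>G\<^esub> k \<oplus>\<^bsub>G\<^esub> k) = s (\<ominus>\<^bsub>G\<^esub> k) \<oplus>\<^bsub>E\<^esub> s k"
    "s (\<ominus>\<^bsub>G\<^esub> k) \<in> carrier E" "s k \<in> carrier E"
    using assms(4,5) k unfolding partial_section_def by blast+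
  then show ?thesis
    using partial_section_zero[OF assms(1-4)] k(1) by (metis G.l_neg E.minus_equality)
qed

section \<open>Quotients carried by a set of coset representatives\<close>

definition rep_index :: "('e, 'm) ring_scheme \<Rightarrow> 'e set \<Rightarrow> 'x set \<Rightarrow> ('x \<Rightarrow> 'e) \<Rightarrow> 'e \<Rightarrow> 'x" where
  "rep_index E S I rep e = (THE x. x \<in> I \<and> e \<ominus>\<^bsub>E\<^esub> rep x \<in> S)"

text \<open>When \<open>rep\<close> picks exactly one element of each coset of \<open>S\<close> in \<open>P\<close>, this is \<open>P/S\<close> carried by
  the index set \<open>I\<close>. \<^const>\<open>Ext_zero\<close> only quantifies over extensions whose carrier lies in a
  product type, so quotients must be realised on such a carrier.\<close>
definition rep_quotient :: "('e, 'm) ring_scheme \<Rightarrow> 'e set \<Rightarrow> 'x set \<Rightarrow> ('x \<Rightarrow> 'e) \<Rightarrow> 'x ring" where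
  "rep_quotient E S I rep = \<lparr>carrier = I, monoid.mult = (\<lambda>x y. x), one = undefined,
     ring.zero = rep_index E S I rep \<zero>\<^bsub>E\<^esub>,
     ring.add = (\<lambda>x y. rep_index E S I rep (rep x \<oplus>\<^bsub>E\<^esub> rep y))\<rparr>"

locale coset_representatives = abelian_group E for E (structure) +
  fixes P S :: "'a set" and I :: "'x set" and rep :: "'x \<Rightarrow> 'a"
  assumes P: "additive_subgroup P E" and S: "additive_subgroup S E" and S_P: "S \<subseteq> P"
    and rep_in: "x \<in> I \<Longrightarrow> rep x \<in> P"
    and ex1_rep: "e \<in> P \<Longrightarrow> \<exists>!x. x \<in> I \<and> e \<ominus> rep x \<in> S"
begin

interpretation P: additive_subgroup P E by (rule P)
interpretation S: additive_subgroup S E by (rule S)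

abbreviation "idx \<equiv> rep_index E S I rep"
abbreviation "T \<equiv> rep_quotient E S I rep"

lemma P_carrier: "e \<in> P \<Longrightarrow> e \<in> carrier E"
  using P.a_subset by blast

lemma rep_carrier: "x \<in> I \<Longrightarrow> rep x \<in> carrier E"
  by (simp add: P_carrier rep_in)

lemma idx_in: "e \<in> P \<Longrightarrow> idx e \<in> I"
  and idx_mod: "e \<in> P \<Longrightarrow> e \<ominus> rep (idx e) \<in> S"
  using theI'[OF ex1_rep] unfolding rep_index_def by blast+

lemma idx_eq: "x \<in> I \<Longrightarrow> e \<in> P \<Longrightarrow> e \<ominus> rep x \<in> S \<Longrightarrow> idx e = x"
  unfolding rep_index_def using ex1_rep by (blast intro: the1_equality)

lemma idx_rep: "x \<in> I \<Longrightarrow> idx (rep x) = x"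
  by (rule idx_eq) (auto simp: rep_in rep_carrier r_neg a_minus_def)

lemma idx_cong:
  assumes "a \<in> P" "b \<in> P" "a \<ominus> b \<in> S"
  shows "idx a = idx b"
proof (rule idx_eq)
  have "a \<ominus> rep (idx b) = (a \<ominus> b) \<oplus> (b \<ominus> rep (idx b))"
    using assms(1,2) idx_in P_carrier rep_carrier by (simp add: a_minus_def a_ac r_neg2)
  then show "a \<ominus> rep (idx b) \<in> S" using assms idx_mod by simp
qed (use assms idx_in in auto)

lemma rep_idx_mod:
  assumes "a \<in> P" shows "rep (idx a) \<ominus> a \<in> S"
proof -
  have "rep (idx a) \<ominus> a = \<ominus> (a \<ominus> rep (idx a))"
    using assms idx_in P_carrier rep_carrier by (simp add: a_minus_def minus_add a_comm minus_minus)
  then show ?thesis using assms idx_mod by simp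
qed

lemma idx_add: "a \<in> P \<Longrightarrow> b \<in> P \<Longrightarrow> idx (rep (idx a) \<oplus> rep (idx b)) = idx (a \<oplus> b)"
proof (rule idx_cong)
  assume ab: "a \<in> P" "b \<in> P"
  then have "rep (idx a) \<oplus> rep (idx b) \<ominus> (a \<oplus> b) = (rep (idx a) \<ominus> a) \<oplus> (rep (idx b) \<ominus> b)"
    using idx_in P_carrier rep_carrier by (simp add: a_minus_def minus_add a_ac)
  then show "rep (idx a) \<oplus> rep (idx b) \<ominus> (a \<oplus> b) \<in> S" using ab rep_idx_mod by simp
qed (auto simp: idx_in rep_in)

lemma T_carrier [simp]: "carrier T = I"
  and T_add [simp]: "x \<oplus>\<^bsub>T\<^esub> y = idx (rep x \<oplus> rep y)"
  and T_zero [simp]: "\<zero>\<^bsub>T\<^esub> = idx \<zero>"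
  by (simp_all add: rep_quotient_def)

lemma idx_add_left: "a \<in> P \<Longrightarrow> b \<in> P \<Longrightarrow> idx (rep (idx a) \<oplus> b) = idx (a \<oplus> b)"
  using idx_add[of "rep (idx a)" b] idx_add[of a b] by (simp add: idx_in idx_rep rep_in)

lemma idx_add_right: "a \<in> P \<Longrightarrow> b \<in> P \<Longrightarrow> idx (a \<oplus> rep (idx b)) = idx (a \<oplus> b)"
  using idx_add_left[of b a] by (simp add: a_comm P_carrier rep_carrier idx_in)

lemma abelian_group_T: "abelian_group T"
proof (rule abelian_groupI)
  fix x y z assume "x \<in> carrier T" "y \<in> carrier T" "z \<in> carrier T"
  then have e: "rep x \<in> P" "rep y \<in> P" "rep z \<in> P" by (auto simp: rep_in)
  then show "x \<oplus>\<^bsub>T\<^esub> y \<in> carrier T" by (simp add: idx_in)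
  show "x \<oplus>\<^bsub>T\<^esub> y \<oplus>\<^bsub>T\<^esub> z = x \<oplus>\<^bsub>T\<^esub> (y \<oplus>\<^bsub>T\<^esub> z)"
    using e by (simp add: idx_add_left idx_add_right a_assoc P_carrier)
  show "x \<oplus>\<^bsub>T\<^esub> y = y \<oplus>\<^bsub>T\<^esub> x" using e by (simp add: a_comm P_carrier)
next
  show "\<zero>\<^bsub>T\<^esub> \<in> carrier T" by (simp add: idx_in)
next
  fix x assume x: "x \<in> carrier T"
  then have e: "rep x \<in> P" by (simp add: rep_in)
  with x show "\<zero>\<^bsub>T\<^esub> \<oplus>\<^bsub>T\<^esub> x = x" by (simp add: idx_add_left P_carrier idx_rep)
  have "idx (\<ominus> rep x) \<oplus>\<^bsub>T\<^esub> x = \<zero>\<^bsub>T\<^esub>" "idx (\<ominus> rep x) \<in> carrier T"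
    using e by (simp_all add: idx_add_left P_carrier l_neg idx_in)
  then show "\<exists>y\<in>carrier T. y \<oplus>\<^bsub>T\<^esub> x = \<zero>\<^bsub>T\<^esub>" by blast
qed

lemma rep_add_mod: "x \<in> I \<Longrightarrow> y \<in> I \<Longrightarrow> rep (x \<oplus>\<^bsub>T\<^esub> y) \<ominus> (rep x \<oplus> rep y) \<in> S"
  by (simp add: rep_idx_mod rep_in)

end

section \<open>The successor step\<close>

text \<open>With \<open>Y \<cong> H/K\<close> via \<open>f\<close>, the group \<open>\<pi>\<^sup>-\<^sup>1(H)/s(K)\<close> (\<open>EH/SK\<close> below) is an extension of \<open>Y\<close>
  by \<open>G\<close>. A splitting of it lifts \<open>H\<close> to \<open>E\<close> up to an error in \<open>K\<close>, which \<open>s\<close> corrects.\<close>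
locale section_extension =
  fixes G :: "(rat, 'a) module" and E :: "('e, 'm) ring_scheme" and i \<pi>
    and K H :: "'a set" and s :: "'a \<Rightarrow> 'e" and Y :: "(rat, 'c) module" and f :: "'a \<Rightarrow> 'c"
  assumes G: "abelian_group G" and ext: "extension G E G i \<pi>"
    and K: "additive_subgroup K G" and H: "additive_subgroup H G" and K_H: "K \<subseteq> H"
    and s: "partial_section G E \<pi> K s"
    and Y: "abelian_group Y" and f: "add_hom (G\<lparr>carrier := H\<rparr>) Y f"
    and f_onto: "f ` H = carrier Y" and f_ker: "{h \<in> H. f h = \<zero>\<^bsub>Y\<^esub>} = K"
begin

sublocale G: abelian_group G by (rule G)
sublocale E: abelian_group E using ext by (simp add: extension_def)
sublocale Y: abelian_group Y by (rule Y)
sublocale i: abelian_group_hom G E i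
  using G ext by (auto simp: extension_def intro: add_hom_abelian_group_hom)
sublocale \<pi>: abelian_group_hom E G \<pi>
  using G ext by (auto simp: extension_def intro: add_hom_abelian_group_hom)
sublocale K: additive_subgroup K G by (rule K)
sublocale H: additive_subgroup H G by (rule H)

lemma i_inj: "inj_on i (carrier G)"
  and \<pi>_onto: "\<pi> ` carrier E = carrier G"
  and ker_\<pi>: "{e \<in> carrier E. \<pi> e = \<zero>\<^bsub>G\<^esub>} = i ` carrier G"
  using ext by (simp_all add: extension_def)

lemma s_in: "k \<in> K \<Longrightarrow> s k \<in> carrier E"
  and \<pi>_s: "k \<in> K \<Longrightarrow> \<pi> (s k) = k"
  and s_add: "k \<in> K \<Longrightarrow> l \<in> K \<Longrightarrow> s (k \<oplus>\<^bsub>G\<^esub> l) = s k \<oplus>\<^bsub>E\<^esub> s l"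
  using s by (simp_all add: partial_section_def)

lemma f_in: "h \<in> H \<Longrightarrow> f h \<in> carrier Y"
  and f_add: "u \<in> H \<Longrightarrow> v \<in> H \<Longrightarrow> f (u \<oplus>\<^bsub>G\<^esub> v) = f u \<oplus>\<^bsub>Y\<^esub> f v"
  using f by (auto simp: add_hom_def)

lemma f_K: "k \<in> K \<Longrightarrow> f k = \<zero>\<^bsub>Y\<^esub>"
  and in_K: "h \<in> H \<Longrightarrow> f h = \<zero>\<^bsub>Y\<^esub> \<Longrightarrow> h \<in> K"
  using f_ker by blast+

lemma f_minus:
  assumes "u \<in> H" "v \<in> H" shows "f (u \<ominus>\<^bsub>G\<^esub> v) = f u \<ominus>\<^bsub>Y\<^esub> f v"
proof -
  have "u \<ominus>\<^bsub>G\<^esub> v \<in> H" using assms by (simp add: a_minus_def)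
  then have "f (u \<ominus>\<^bsub>G\<^esub> v) \<oplus>\<^bsub>Y\<^esub> f v = f u"
    using assms H.a_subset f_add[of "u \<ominus>\<^bsub>G\<^esub> v" v] by (auto simp: G.minus_add_cancel)
  then show ?thesis
    using assms \<open>u \<ominus>\<^bsub>G\<^esub> v \<in> H\<close> f_in by (metis Y.minus_add_cancel Y.add.right_cancel Y.minus_closed)
qed

definition EH :: "'e set" where "EH = {e \<in> carrier E. \<pi> e \<in> H}"

definition SK :: "'e set" where "SK = s ` K"

text \<open>\<open>lift 0 = 0\<close> makes \<open>rep (g, 0) = i g\<close>, so that \<open>G\<close> embeds into the quotient.\<close>
definition lift :: "'c \<Rightarrow> 'e" where
  "lift c = (if c = \<zero>\<^bsub>Y\<^esub> then \<zero>\<^bsub>E\<^esub> else SOME e. e \<in> EH \<and> f (\<pi> e) = c)"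

definition rep :: "'a \<times> 'c \<Rightarrow> 'e" where "rep x = i (fst x) \<oplus>\<^bsub>E\<^esub> lift (snd x)"

lemma lift: assumes "c \<in> carrier Y" shows "lift c \<in> EH" "f (\<pi> (lift c)) = c"
proof -
  obtain h where h: "h \<in> H" "f h = c" using assms f_onto by (metis imageE)
  then have "h \<in> \<pi> ` carrier E" using H.a_subset \<pi>_onto by auto
  then obtain e where "e \<in> carrier E" "\<pi> e = h" by (rule imageE) simp
  with h have "\<exists>e. e \<in> EH \<and> f (\<pi> e) = c" by (auto simp: EH_def)
  from someI_ex[OF this] show "lift c \<in> EH" "f (\<pi> (lift c)) = c"
    using f_K[OF K.zero_closed] by (auto simp: lift_def EH_def)
qed

lemma lift_zero: "lift \<zero>\<^bsub>Y\<^esub> = \<zero>\<^bsub>E\<^esub>"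
  by (simp add: lift_def)

lemma EH_carrier: "e \<in> EH \<Longrightarrow> e \<in> carrier E"
  and \<pi>_EH: "e \<in> EH \<Longrightarrow> \<pi> e \<in> H"
  by (simp_all add: EH_def)

lemma lift_carrier: "c \<in> carrier Y \<Longrightarrow> lift c \<in> carrier E"
  using lift EH_carrier by blast

lemma EH_subgroup: "additive_subgroup EH E"
  using H.a_subset by (auto simp: additive_subgroup_iff EH_def)

lemma SK_subgroup: "additive_subgroup SK E"
  unfolding additive_subgroup_iff
proof (intro conjI ballI)
  show "SK \<subseteq> carrier E" using s_in by (auto simp: SK_def)
  show "\<zero>\<^bsub>E\<^esub> \<in> SK"
    using partial_section_zero[OF G E.abelian_group_axioms K s] K.zero_closed
    unfolding SK_def by (metis image_eqI)
next
  fix a b assume "a \<in> SK" "b \<in> SK"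
  then obtain k l where "k \<in> K" "l \<in> K" "a = s k" "b = s l" by (auto simp: SK_def)
  then show "a \<oplus>\<^bsub>E\<^esub> b \<in> SK" "\<ominus>\<^bsub>E\<^esub> a \<in> SK"
    using s_add partial_section_neg[OF G E.abelian_group_axioms K s]
    unfolding SK_def by (metis K.a_closed image_eqI, metis K.a_inv_closed image_eqI)
qed

lemma SK_EH: "SK \<subseteq> EH"
  using s_in \<pi>_s K_H by (auto simp: SK_def EH_def)

lemma rep_carrier: "x \<in> carrier G \<times> carrier Y \<Longrightarrow> rep x \<in> carrier E"
  by (auto simp: rep_def lift_carrier)

lemma \<pi>_rep: "x \<in> carrier G \<times> carrier Y \<Longrightarrow> \<pi> (rep x) = \<pi> (lift (snd x))"
  using ker_\<pi> by (auto simp: rep_def lift_carrier)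

lemma rep_in: "x \<in> carrier G \<times> carrier Y \<Longrightarrow> rep x \<in> EH"
  using \<pi>_rep lift rep_carrier by (auto simp: EH_def)

lemma f_rep: "x \<in> carrier G \<times> carrier Y \<Longrightarrow> f (\<pi> (rep x)) = snd x"
  using \<pi>_rep lift by auto

lemma minus_in_SK:
  assumes "e \<in> carrier E" "b \<in> carrier E"
  shows "e \<ominus>\<^bsub>E\<^esub> b \<in> SK \<longleftrightarrow> (\<exists>k\<in>K. e = b \<oplus>\<^bsub>E\<^esub> s k)"
proof
  assume "e \<ominus>\<^bsub>E\<^esub> b \<in> SK"
  then obtain k where "k \<in> K" "e \<ominus>\<^bsub>E\<^esub> b = s k" by (auto simp: SK_def)
  then show "\<exists>k\<in>K. e = b \<oplus>\<^bsub>E\<^esub> s k" using assms by (metis E.add_minus_cancel)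
next
  assume "\<exists>k\<in>K. e = b \<oplus>\<^bsub>E\<^esub> s k"
  then obtain k where "k \<in> K" "e = b \<oplus>\<^bsub>E\<^esub> s k" by blast
  then show "e \<ominus>\<^bsub>E\<^esub> b \<in> SK" using assms s_in by (simp add: E.add_minus_cancel_left SK_def)
qed

lemma snd_eq_f:
  assumes "x \<in> carrier G \<times> carrier Y" "k \<in> K" "e = rep x \<oplus>\<^bsub>E\<^esub> s k"
  shows "snd x = f (\<pi> e)"
proof -
  have "\<pi> e = \<pi> (rep x) \<oplus>\<^bsub>G\<^esub> k" using assms rep_carrier s_in \<pi>_s by simp
  then have "f (\<pi> e) = f (\<pi> (rep x)) \<oplus>\<^bsub>Y\<^esub> f k"
    using assms K_H \<pi>_EH rep_in f_add by auto
  then show ?thesis using assms f_rep f_K by auto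
qed

lemma rep_exists:
  assumes "e \<in> EH"
  obtains g k where "g \<in> carrier G" "k \<in> K" "e = rep (g, f (\<pi> e)) \<oplus>\<^bsub>E\<^esub> s k"
proof -
  define c where "c = f (\<pi> e)"
  have c: "c \<in> carrier Y" using assms f_in \<pi>_EH by (simp add: c_def)
  define d where "d = e \<ominus>\<^bsub>E\<^esub> lift c"
  have e: "e \<in> carrier E" using assms EH_carrier by blast
  have d: "d \<in> carrier E" "e = lift c \<oplus>\<^bsub>E\<^esub> d"
    using e c lift_carrier by (simp_all add: d_def E.add_minus_cancel)
  have "\<pi> d = \<pi> e \<ominus>\<^bsub>G\<^esub> \<pi> (lift c)"
    using e c lift_carrier by (simp add: d_def a_minus_def)
  moreover have "\<pi> (lift c) \<in> H" using lift c \<pi>_EH by blast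
  ultimately have "\<pi> d \<in> H" "f (\<pi> d) = \<zero>\<^bsub>Y\<^esub>"
    using assms \<pi>_EH lift c f_minus by (simp_all add: a_minus_def c_def Y.r_neg)
  then have k: "\<pi> d \<in> K" by (rule in_K)
  have "d \<ominus>\<^bsub>E\<^esub> s (\<pi> d) \<in> carrier E" "\<pi> (d \<ominus>\<^bsub>E\<^esub> s (\<pi> d)) = \<zero>\<^bsub>G\<^esub>"
    using d k s_in \<pi>_s by (simp_all add: a_minus_def G.r_neg)
  then obtain g where g: "g \<in> carrier G" "d \<ominus>\<^bsub>E\<^esub> s (\<pi> d) = i g" using ker_\<pi> by blast
  then have "d = s (\<pi> d) \<oplus>\<^bsub>E\<^esub> i g" using d k s_in by (metis E.add_minus_cancel)
  with d(2) have "e = lift c \<oplus>\<^bsub>E\<^esub> (s (\<pi> d) \<oplus>\<^bsub>E\<^esub> i g)" by simp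
  then have "e = rep (g, c) \<oplus>\<^bsub>E\<^esub> s (\<pi> d)"
    using g k s_in c lift_carrier by (simp add: rep_def E.a_ac)
  then show thesis using that g k by (simp add: c_def)
qed

lemma rep_unique:
  assumes x: "x \<in> carrier G \<times> carrier Y" and y: "y \<in> carrier G \<times> carrier Y"
    and k: "k \<in> K" "l \<in> K" and eq: "rep x \<oplus>\<^bsub>E\<^esub> s k = rep y \<oplus>\<^bsub>E\<^esub> s l"
  shows "x = y"
proof -
  have "snd x = snd y" using snd_eq_f[OF x k(1) refl] snd_eq_f[OF y k(2) refl] eq by simp
  then obtain g h c where xy: "x = (g, c)" "y = (h, c)" "g \<in> carrier G" "h \<in> carrier G" "c \<in> carrier Y"
    using x y by (cases x, cases y) auto
  have "\<pi> (lift c) \<oplus>\<^bsub>G\<^esub> k = \<pi> (lift c) \<oplus>\<^bsub>G\<^esub> l"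
    using arg_cong[OF eq, of \<pi>] x y k \<pi>_rep rep_carrier s_in \<pi>_s xy by simp
  then have "k = l" using xy(5) lift_carrier k K.a_subset by (simp add: subset_iff)
  then have "i g \<oplus>\<^bsub>E\<^esub> (lift c \<oplus>\<^bsub>E\<^esub> s k) = i h \<oplus>\<^bsub>E\<^esub> (lift c \<oplus>\<^bsub>E\<^esub> s k)"
    using eq xy k s_in lift_carrier by (simp add: rep_def E.a_assoc)
  then have "i g = i h" using xy k s_in lift_carrier by simp
  then show ?thesis using xy i_inj by (simp add: inj_on_def)
qed

lemma ex1_rep:
  assumes "e \<in> EH" shows "\<exists>!x. x \<in> carrier G \<times> carrier Y \<and> e \<ominus>\<^bsub>E\<^esub> rep x \<in> SK"
proof -
  obtain g k where gk: "g \<in> carrier G" "k \<in> K" "e = rep (g, f (\<pi> e)) \<oplus>\<^bsub>E\<^esub> s k"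
    using rep_exists[OF assms] .
  have e: "e \<in> carrier E" using assms EH_carrier by blast
  have x: "(g, f (\<pi> e)) \<in> carrier G \<times> carrier Y" using gk assms f_in \<pi>_EH by simp
  show ?thesis
  proof (rule ex1I[of _ "(g, f (\<pi> e))"])
    show "(g, f (\<pi> e)) \<in> carrier G \<times> carrier Y \<and> e \<ominus>\<^bsub>E\<^esub> rep (g, f (\<pi> e)) \<in> SK"
      using x gk e rep_carrier minus_in_SK by blast
  next
    fix y assume y: "y \<in> carrier G \<times> carrier Y \<and> e \<ominus>\<^bsub>E\<^esub> rep y \<in> SK"
    then obtain l where "l \<in> K" "e = rep y \<oplus>\<^bsub>E\<^esub> s l" using minus_in_SK e rep_carrier by blast
    then show "y = (g, f (\<pi> e))" using rep_unique[OF _ x] y gk by metis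
  qed
qed

sublocale Q: coset_representatives E EH SK "carrier G \<times> carrier Y" rep
  by (rule coset_representatives.intro[OF E.abelian_group_axioms coset_representatives_axioms.intro])
    (use EH_subgroup SK_subgroup SK_EH rep_in ex1_rep in auto)

lemma idx_i: "g \<in> carrier G \<Longrightarrow> Q.idx (i g) = (g, \<zero>\<^bsub>Y\<^esub>)"
  using Q.idx_rep[of "(g, \<zero>\<^bsub>Y\<^esub>)"] by (simp add: rep_def lift_zero)

lemma snd_idx: assumes "e \<in> EH" shows "snd (Q.idx e) = f (\<pi> e)"
proof -
  obtain k where "k \<in> K" "e = rep (Q.idx e) \<oplus>\<^bsub>E\<^esub> s k"
    using Q.idx_mod[OF assms] minus_in_SK[OF EH_carrier[OF assms] rep_carrier[OF Q.idx_in[OF assms]]]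
    by blast
  then show ?thesis using snd_eq_f assms Q.idx_in by blast
qed

lemma T_extension: "extension G Q.T Y (\<lambda>g. (g, \<zero>\<^bsub>Y\<^esub>)) snd"
  unfolding extension_def
proof (intro conjI)
  show "abelian_group Q.T" by (rule Q.abelian_group_T)
  show "add_hom G Q.T (\<lambda>g. (g, \<zero>\<^bsub>Y\<^esub>))"
    by (auto simp: add_hom_def rep_def lift_zero idx_i simp flip: i.hom_add)
  have "snd (x \<oplus>\<^bsub>Q.T\<^esub> y) = snd x \<oplus>\<^bsub>Y\<^esub> snd y"
    if "x \<in> carrier G \<times> carrier Y" "y \<in> carrier G \<times> carrier Y" for x y
  proof -
    have "snd (x \<oplus>\<^bsub>Q.T\<^esub> y) = f (\<pi> (rep x) \<oplus>\<^bsub>G\<^esub> \<pi> (rep y))"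
      using that rep_in rep_carrier EH_subgroup by (simp add: snd_idx additive_subgroup.a_closed)
    also have "\<dots> = snd x \<oplus>\<^bsub>Y\<^esub> snd y"
      using that rep_in \<pi>_EH f_add f_rep by simp
    finally show ?thesis .
  qed
  then show "add_hom Q.T Y snd" by (auto simp: add_hom_def)
  show "snd ` carrier Q.T = carrier Y" by force
qed (auto simp: inj_on_def)

context
  fixes \<sigma> :: "'c \<Rightarrow> 'a \<times> 'c"
  assumes \<sigma>_hom: "add_hom Y Q.T \<sigma>" and snd_\<sigma>: "\<forall>a\<in>carrier Y. snd (\<sigma> a) = a"
begin

definition lift_H :: "'a \<Rightarrow> 'e" where "lift_H h = rep (\<sigma> (f h))"

definition section_H :: "'a \<Rightarrow> 'e" where
  "section_H h = lift_H h \<oplus>\<^bsub>E\<^esub> s (h \<ominus>\<^bsub>G\<^esub> \<pi> (lift_H h))"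

lemma \<sigma>_in: "a \<in> carrier Y \<Longrightarrow> \<sigma> a \<in> carrier G \<times> carrier Y"
  using \<sigma>_hom by (auto simp: add_hom_def)

lemma lift_H_in: "h \<in> H \<Longrightarrow> lift_H h \<in> EH"
  and lift_H_carrier: "h \<in> H \<Longrightarrow> lift_H h \<in> carrier E"
  by (simp_all add: lift_H_def rep_in rep_carrier \<sigma>_in f_in)

lemma correction_in_K: assumes "h \<in> H" shows "h \<ominus>\<^bsub>G\<^esub> \<pi> (lift_H h) \<in> K"
proof (rule in_K)
  show "h \<ominus>\<^bsub>G\<^esub> \<pi> (lift_H h) \<in> H" using assms lift_H_in \<pi>_EH by (simp add: a_minus_def)
  have "f (\<pi> (lift_H h)) = f h" using assms f_rep \<sigma>_in f_in snd_\<sigma> by (simp add: lift_H_def)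
  then show "f (h \<ominus>\<^bsub>G\<^esub> \<pi> (lift_H h)) = \<zero>\<^bsub>Y\<^esub>"
    using assms lift_H_in \<pi>_EH f_minus f_in by (simp add: a_minus_def Y.r_neg)
qed

lemma lift_H_add:
  assumes "u \<in> H" "v \<in> H"
  obtains k where "k \<in> K" "lift_H (u \<oplus>\<^bsub>G\<^esub> v) = (lift_H u \<oplus>\<^bsub>E\<^esub> lift_H v) \<oplus>\<^bsub>E\<^esub> s k"
proof -
  have "\<sigma> (f (u \<oplus>\<^bsub>G\<^esub> v)) = \<sigma> (f u) \<oplus>\<^bsub>Q.T\<^esub> \<sigma> (f v)"
    using \<sigma>_hom f_in[OF assms(1)] f_in[OF assms(2)] f_add[OF assms] by (simp add: add_hom_def)
  then have "lift_H (u \<oplus>\<^bsub>G\<^esub> v) \<ominus>\<^bsub>E\<^esub> (lift_H u \<oplus>\<^bsub>E\<^esub> lift_H v) \<in> SK"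
    using Q.rep_add_mod[OF \<sigma>_in[OF f_in[OF assms(1)]] \<sigma>_in[OF f_in[OF assms(2)]]]
    by (simp only: lift_H_def)
  moreover have "lift_H (u \<oplus>\<^bsub>G\<^esub> v) \<in> carrier E" "lift_H u \<oplus>\<^bsub>E\<^esub> lift_H v \<in> carrier E"
    using assms lift_H_carrier by simp_all
  ultimately show thesis using that minus_in_SK by blast
qed

lemma section_H: "partial_section G E \<pi> H section_H"
  unfolding partial_section_def
proof (intro conjI ballI)
  fix h assume h: "h \<in> H"
  then show "section_H h \<in> carrier E"
    using lift_H_carrier correction_in_K s_in by (simp add: section_H_def)
  show "\<pi> (section_H h) = h"
    using h lift_H_carrier correction_in_K s_in \<pi>_s H.a_subset
    by (simp add: section_H_def G.add_minus_cancel subset_iff)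
next
  fix u v assume uv: "u \<in> H" "v \<in> H"
  then have uv': "u \<oplus>\<^bsub>G\<^esub> v \<in> H" by simp
  obtain k where k: "k \<in> K" "lift_H (u \<oplus>\<^bsub>G\<^esub> v) = (lift_H u \<oplus>\<^bsub>E\<^esub> lift_H v) \<oplus>\<^bsub>E\<^esub> s k"
    using lift_H_add[OF uv] .
  define m where "m h = h \<ominus>\<^bsub>G\<^esub> \<pi> (lift_H h)" for h
  have m: "h \<in> H \<Longrightarrow> m h \<in> K" "h \<in> H \<Longrightarrow> \<pi> (lift_H h) \<oplus>\<^bsub>G\<^esub> m h = h" for h
    using correction_in_K lift_H_carrier H.a_subset by (auto simp: m_def G.add_minus_cancel)
  have carr: "\<pi> (lift_H u) \<in> carrier G" "\<pi> (lift_H v) \<in> carrier G" "k \<in> carrier G"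
    "m u \<in> carrier G" "m v \<in> carrier G" "m (u \<oplus>\<^bsub>G\<^esub> v) \<in> carrier G"
    using uv uv' k lift_H_carrier m(1) K.a_subset by auto
  have "(\<pi> (lift_H u) \<oplus>\<^bsub>G\<^esub> \<pi> (lift_H v)) \<oplus>\<^bsub>G\<^esub> (k \<oplus>\<^bsub>G\<^esub> m (u \<oplus>\<^bsub>G\<^esub> v))
      = \<pi> (lift_H (u \<oplus>\<^bsub>G\<^esub> v)) \<oplus>\<^bsub>G\<^esub> m (u \<oplus>\<^bsub>G\<^esub> v)"
    using k uv lift_H_carrier s_in \<pi>_s carr by (simp add: G.a_assoc)
  also have "\<dots> = (\<pi> (lift_H u) \<oplus>\<^bsub>G\<^esub> m u) \<oplus>\<^bsub>G\<^esub> (\<pi> (lift_H v) \<oplus>\<^bsub>G\<^esub> m v)"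
    using m(2) uv uv' by simp
  also have "\<dots> = (\<pi> (lift_H u) \<oplus>\<^bsub>G\<^esub> \<pi> (lift_H v)) \<oplus>\<^bsub>G\<^esub> (m u \<oplus>\<^bsub>G\<^esub> m v)"
    using carr by (simp add: G.a_ac)
  finally have "k \<oplus>\<^bsub>G\<^esub> m (u \<oplus>\<^bsub>G\<^esub> v) = m u \<oplus>\<^bsub>G\<^esub> m v"
    using carr by simp
  then have "s k \<oplus>\<^bsub>E\<^esub> s (m (u \<oplus>\<^bsub>G\<^esub> v)) = s (m u) \<oplus>\<^bsub>E\<^esub> s (m v)"
    using k uv uv' m(1) s_add by metis
  moreover have "section_H h = lift_H h \<oplus>\<^bsub>E\<^esub> s (m h)" for h
    by (simp add: section_H_def m_def)
  moreover have "lift_H u \<in> carrier E" "lift_H v \<in> carrier E"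
    "s k \<in> carrier E" "s (m u) \<in> carrier E" "s (m v) \<in> carrier E" "s (m (u \<oplus>\<^bsub>G\<^esub> v)) \<in> carrier E"
    using k uv uv' lift_H_carrier m(1) s_in by auto
  ultimately show "section_H (u \<oplus>\<^bsub>G\<^esub> v) = section_H u \<oplus>\<^bsub>E\<^esub> section_H v"
    using k(2) by (simp add: E.a_assoc) (simp add: E.a_ac)
qed

lemma section_H_K:
  assumes "k \<in> K" shows "section_H k = s k"
proof -
  have "\<sigma> (f k) = Q.idx \<zero>\<^bsub>E\<^esub>"
    using assms f_K add_hom_zero[OF Y Q.abelian_group_T \<sigma>_hom] by simp
  then have "lift_H k \<ominus>\<^bsub>E\<^esub> \<zero>\<^bsub>E\<^esub> \<in> SK"
    using Q.rep_idx_mod[OF EH_subgroup[THEN additive_subgroup.zero_closed]] by (simp add: lift_H_def)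
  moreover have "lift_H k \<in> carrier E" using assms K_H lift_H_carrier by blast
  ultimately obtain l where "l \<in> K" "lift_H k = \<zero>\<^bsub>E\<^esub> \<oplus>\<^bsub>E\<^esub> s l"
    using minus_in_SK[OF _ E.zero_closed] by blast
  then have l: "l \<in> K" "lift_H k = s l" using s_in by simp_all
  then have "section_H k = s (l \<oplus>\<^bsub>G\<^esub> (k \<ominus>\<^bsub>G\<^esub> l))"
    using assms \<pi>_s s_add by (simp add: section_H_def a_minus_def)
  then show ?thesis using assms l K.a_subset by (simp add: G.add_minus_cancel subset_iff)
qed

end

lemma section_extends:
  assumes "Ext_zero Y G"
  obtains s' where "partial_section G E \<pi> H s'" "\<forall>k\<in>K. s' k = s k"
proof -
  obtain \<sigma> where "add_hom Y Q.T \<sigma>" "\<forall>a\<in>carrier Y. snd (\<sigma> a) = a"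
    using assms[unfolded Ext_zero_iff, rule_format, OF T_extension] by blast
  then show thesis using that section_H section_H_K by blast
qed

end

section \<open>Eklof's lemma\<close>

definition immediate_succ :: "'i rel \<Rightarrow> 'i \<Rightarrow> 'i \<Rightarrow> bool" where
  "immediate_succ r \<alpha> \<beta> \<longleftrightarrow> \<beta> \<in> aboveS r \<alpha> \<and> (\<forall>\<gamma>\<in>aboveS r \<alpha>. (\<beta>, \<gamma>) \<in> r)"

definition graph_app :: "('a \<times> 'b) set \<Rightarrow> 'a \<Rightarrow> 'b" where
  "graph_app Q d = (THE e. (d, e) \<in> Q)"

lemma graph_app_in: "single_valued Q \<Longrightarrow> d \<in> Domain Q \<Longrightarrow> (d, graph_app Q d) \<in> Q"
  unfolding graph_app_def by (rule theI') (auto simp: single_valued_def)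

lemma graph_app_eq: "single_valued Q \<Longrightarrow> (d, e) \<in> Q \<Longrightarrow> graph_app Q d = e"
  unfolding graph_app_def by (rule the_equality) (auto simp: single_valued_def)

lemma graph_app_subset_graph:
  assumes "single_valued Q" "Domain Q \<subseteq> D" "\<forall>d\<in>Domain Q. s d = graph_app Q d"
  shows "Q \<subseteq> (\<lambda>d. (d, s d)) ` D"
proof
  fix p assume p: "p \<in> Q"
  obtain d e where de: "p = (d, e)" by (cases p)
  with p have "d \<in> Domain Q" "graph_app Q d = e" using graph_app_eq[OF assms(1)] by auto
  then have "d \<in> D" "e = s d" using assms(2,3) by auto
  then show "p \<in> (\<lambda>d. (d, s d)) ` D" using de by blast
qed

locale continuous_chain =
  fixes G :: "('a, 'g) ring_scheme" and r :: "'i rel" and C :: "'i \<Rightarrow> 'a set"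
  assumes well_order: "Well_order r"
    and subgroup: "\<alpha> \<in> Field r \<Longrightarrow> additive_subgroup (C \<alpha>) G"
    and mono: "(\<alpha>, \<beta>) \<in> r \<Longrightarrow> C \<alpha> \<subseteq> C \<beta>"
    and bottom: "\<alpha> \<in> Field r \<Longrightarrow> \<forall>\<beta>\<in>Field r. (\<alpha>, \<beta>) \<in> r \<Longrightarrow> C \<alpha> = {\<zero>\<^bsub>G\<^esub>}"
    and continuous: "\<alpha> \<in> Field r \<Longrightarrow> underS r \<alpha> \<noteq> {} \<Longrightarrow>
      \<forall>\<beta>\<in>underS r \<alpha>. \<exists>\<gamma>\<in>underS r \<alpha>. \<beta> \<in> underS r \<gamma> \<Longrightarrow> C \<alpha> = (\<Union>\<beta>\<in>underS r \<alpha>. C \<beta>)"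
    and union: "(\<Union>\<alpha>\<in>Field r. C \<alpha>) = carrier G"
begin

lemma wo: "wo_rel r"
  using well_order by (simp add: wo_rel_def)

lemma linear: "\<alpha> \<in> Field r \<Longrightarrow> \<beta> \<in> Field r \<Longrightarrow> (\<alpha>, \<beta>) \<in> r \<or> (\<beta>, \<alpha>) \<in> r"
  using wo_rel.TOTALS[OF wo] by blast

lemma antisym: "(\<alpha>, \<beta>) \<in> r \<Longrightarrow> (\<beta>, \<alpha>) \<in> r \<Longrightarrow> \<alpha> = \<beta>"
  using wo_rel.ANTISYM[OF wo] by (simp add: antisym_def)

lemma not_le_iff_less: "\<alpha> \<in> Field r \<Longrightarrow> \<beta> \<in> Field r \<Longrightarrow> (\<alpha>, \<beta>) \<notin> r \<longleftrightarrow> \<beta> \<in> underS r \<alpha>"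
  using linear antisym wo_rel.REFL[OF wo] by (auto simp: underS_def refl_on_def)

lemma C_subset: "\<alpha> \<in> Field r \<Longrightarrow> C \<alpha> \<subseteq> carrier G"
  using subgroup additive_subgroup.a_subset by blast

lemma Union_unbounded:
  assumes A: "A \<subseteq> Field r" and unbounded: "\<And>\<beta>. \<beta> \<in> Field r \<Longrightarrow> \<exists>\<alpha>\<in>A. (\<alpha>, \<beta>) \<notin> r"
  shows "(\<Union>\<alpha>\<in>A. C \<alpha>) = carrier G"
proof
  show "(\<Union>\<alpha>\<in>A. C \<alpha>) \<subseteq> carrier G" using A C_subset by blast
  show "carrier G \<subseteq> (\<Union>\<alpha>\<in>A. C \<alpha>)"
  proof
    fix x assume "x \<in> carrier G"
    then obtain \<beta> where \<beta>: "\<beta> \<in> Field r" "x \<in> C \<beta>" using union by auto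
    then obtain \<alpha> where \<alpha>: "\<alpha> \<in> A" "(\<alpha>, \<beta>) \<notin> r" using unbounded by blast
    then have "(\<beta>, \<alpha>) \<in> r" using linear[OF _ \<beta>(1)] A by blast
    then show "x \<in> (\<Union>\<alpha>\<in>A. C \<alpha>)" using mono \<alpha>(1) \<beta>(2) by blast
  qed
qed

text \<open>If \<open>\<gamma>\<close> is not attained in \<open>A\<close>, it is a limit index and continuity applies.\<close>
lemma Union_least_upper_bound:
  assumes A: "A \<subseteq> Field r" "A \<noteq> {}" and \<gamma>: "\<gamma> \<in> Field r" "\<forall>\<alpha>\<in>A. (\<alpha>, \<gamma>) \<in> r"
    and least: "\<And>\<beta>. \<beta> \<in> Field r \<Longrightarrow> \<forall>\<alpha>\<in>A. (\<alpha>, \<beta>) \<in> r \<Longrightarrow> (\<gamma>, \<beta>) \<in> r"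
  shows "(\<Union>\<alpha>\<in>A. C \<alpha>) = C \<gamma>"
proof (cases "\<gamma> \<in> A")
  case True
  then show ?thesis using \<gamma>(2) mono by blast
next
  case False
  then have A_below: "A \<subseteq> underS r \<gamma>" using \<gamma>(2) by (auto simp: underS_def)
  have cofinal: "\<exists>\<alpha>\<in>A. \<beta> \<in> underS r \<alpha>" if "\<beta> \<in> underS r \<gamma>" for \<beta>
  proof -
    have \<beta>: "\<beta> \<in> Field r" "(\<gamma>, \<beta>) \<notin> r" using that antisym by (auto simp: underS_def Field_def)
    then obtain \<alpha> where "\<alpha> \<in> A" "(\<alpha>, \<beta>) \<notin> r" using least by blast
    then show ?thesis using not_le_iff_less \<beta>(1) A(1) by blast
  qed
  have "C \<gamma> = (\<Union>\<beta>\<in>underS r \<gamma>. C \<beta>)"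
    using continuous[OF \<gamma>(1)] A_below A(2) cofinal by blast
  also have "\<dots> \<subseteq> (\<Union>\<alpha>\<in>A. C \<alpha>)"
    using cofinal mono by (fastforce simp: underS_def)
  finally show ?thesis using \<gamma>(2) mono by blast
qed

lemma Union_members:
  assumes Y: "Y \<subseteq> C ` Field r \<union> {carrier G}" "Y \<noteq> {}"
  shows "\<Union>Y \<in> C ` Field r \<union> {carrier G}"
proof (cases "carrier G \<in> Y")
  case True
  then have "\<Union>Y = carrier G" using Y union by auto
  then show ?thesis by simp
next
  case False
  define A where "A = {\<alpha>\<in>Field r. C \<alpha> \<in> Y}"
  have UA: "\<Union>Y = (\<Union>\<alpha>\<in>A. C \<alpha>)" and A: "A \<subseteq> Field r" "A \<noteq> {}"
    using Y False by (auto simp: A_def)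
  define B where "B = {\<beta>\<in>Field r. \<forall>\<alpha>\<in>A. (\<alpha>, \<beta>) \<in> r}"
  show ?thesis
  proof (cases "B = {}")
    case True
    then have "(\<Union>\<alpha>\<in>A. C \<alpha>) = carrier G" using A(1) by (intro Union_unbounded) (auto simp: B_def)
    then show ?thesis using UA by simp
  next
    case False
    have B: "B \<subseteq> Field r" by (auto simp: B_def)
    define \<gamma> where "\<gamma> = wo_rel.minim r B"
    have "\<gamma> \<in> B" "\<And>\<beta>. \<beta> \<in> B \<Longrightarrow> (\<gamma>, \<beta>) \<in> r"
      using wo_rel.minim_in[OF wo B False] wo_rel.minim_least[OF wo B] by (simp_all add: \<gamma>_def)
    then have \<gamma>: "\<gamma> \<in> Field r" "\<forall>\<alpha>\<in>A. (\<alpha>, \<gamma>) \<in> r"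
      "\<And>\<beta>. \<beta> \<in> Field r \<Longrightarrow> \<forall>\<alpha>\<in>A. (\<alpha>, \<beta>) \<in> r \<Longrightarrow> (\<gamma>, \<beta>) \<in> r"
      by (auto simp: B_def)
    then show ?thesis using UA Union_least_upper_bound[OF A \<gamma>] by simp
  qed
qed

text \<open>Take \<open>\<beta>\<close> least with \<open>C \<beta> \<not>\<subseteq> C \<alpha>\<close>; by continuity it is not a limit, so it has an immediate
  predecessor \<open>\<alpha>'\<close>, and \<open>C \<alpha>' = C \<alpha>\<close> by minimality.\<close>
lemma exists_immediate_succ:
  assumes \<alpha>: "\<alpha> \<in> Field r" and ne: "C \<alpha> \<noteq> carrier G"
  obtains \<alpha>' \<beta> where "\<alpha>' \<in> Field r" "immediate_succ r \<alpha>' \<beta>" "C \<alpha>' = C \<alpha>" "\<not> C \<beta> \<subseteq> C \<alpha>"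
proof -
  define B where "B = {\<delta>\<in>Field r. \<not> C \<delta> \<subseteq> C \<alpha>}"
  have BF: "B \<subseteq> Field r" by (auto simp: B_def)
  have "B \<noteq> {}"
  proof
    assume "B = {}"
    then have "carrier G \<subseteq> C \<alpha>" unfolding union[symmetric] B_def by blast
    then show False using ne C_subset[OF \<alpha>] by blast
  qed
  define \<beta> where "\<beta> = wo_rel.minim r B"
  have \<beta>: "\<beta> \<in> B" "\<And>\<delta>. \<delta> \<in> B \<Longrightarrow> (\<beta>, \<delta>) \<in> r"
    using wo_rel.minim_in[OF wo BF \<open>B \<noteq> {}\<close>] wo_rel.minim_least[OF wo BF] by (simp_all add: \<beta>_def)
  then have \<beta>F: "\<beta> \<in> Field r" and not_sub: "\<not> C \<beta> \<subseteq> C \<alpha>" by (auto simp: B_def)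
  have below: "C \<gamma> \<subseteq> C \<alpha>" if "\<gamma> \<in> underS r \<beta>" for \<gamma>
    using that \<beta>(2) antisym by (fastforce simp: B_def underS_def Field_def)
  have "\<alpha> \<in> underS r \<beta>"
    using not_le_iff_less[OF \<beta>F \<alpha>] mono not_sub by blast
  moreover have "\<not> (\<forall>\<gamma>\<in>underS r \<beta>. \<exists>\<delta>\<in>underS r \<beta>. \<gamma> \<in> underS r \<delta>)"
  proof
    assume "\<forall>\<gamma>\<in>underS r \<beta>. \<exists>\<delta>\<in>underS r \<beta>. \<gamma> \<in> underS r \<delta>"
    with \<open>\<alpha> \<in> underS r \<beta>\<close> have "C \<beta> = (\<Union>\<gamma>\<in>underS r \<beta>. C \<gamma>)" using continuous[OF \<beta>F] by blast
    then show False using below not_sub by blast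
  qed
  then obtain \<alpha>' where \<alpha>': "\<alpha>' \<in> underS r \<beta>" and gap: "\<And>\<delta>. \<delta> \<in> underS r \<beta> \<Longrightarrow> \<alpha>' \<notin> underS r \<delta>"
    by blast
  have \<alpha>'F: "\<alpha>' \<in> Field r" using \<alpha>' by (auto simp: underS_def Field_def)
  have "immediate_succ r \<alpha>' \<beta>"
    unfolding immediate_succ_def
  proof (intro conjI ballI)
    show "\<beta> \<in> aboveS r \<alpha>'" using \<alpha>' by (auto simp: underS_def aboveS_def)
    fix \<gamma> assume \<gamma>: "\<gamma> \<in> aboveS r \<alpha>'"
    then have "\<gamma> \<in> Field r" "\<alpha>' \<in> underS r \<gamma>" by (auto simp: aboveS_def underS_def Field_def)
    then show "(\<beta>, \<gamma>) \<in> r" using gap not_le_iff_less[OF \<beta>F] by blast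
  qed
  moreover have "C \<alpha>' = C \<alpha>"
  proof
    show "C \<alpha>' \<subseteq> C \<alpha>" using below \<alpha>' by blast
    have "(\<alpha>, \<alpha>') \<in> r" using gap[OF \<open>\<alpha> \<in> underS r \<beta>\<close>] not_le_iff_less[OF \<alpha> \<alpha>'F] by blast
    then show "C \<alpha> \<subseteq> C \<alpha>'" by (rule mono)
  qed
  ultimately show thesis using that \<alpha>'F not_sub by blast
qed

context
  fixes E :: "('e, 'm) ring_scheme" and \<pi> :: "'e \<Rightarrow> 'a"
  assumes G: "abelian_group G" and E: "abelian_group E" and \<pi>: "add_hom E G \<pi>"
begin

interpretation G: abelian_group G by (rule G)
interpretation E: abelian_group E by (rule E)

text \<open>Partial sections over members of the chain, represented by their graphs so that
  Zorn's lemma can be applied to the inclusion order.\<close>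
definition sections_on_chain :: "('a \<times> 'e) set set" where
  "sections_on_chain = {Q. single_valued Q \<and> Domain Q \<in> C ` Field r \<union> {carrier G} \<and>
     partial_section G E \<pi> (Domain Q) (graph_app Q)}"

lemma member_add_closed:
  "D \<in> C ` Field r \<union> {carrier G} \<Longrightarrow> u \<in> D \<Longrightarrow> v \<in> D \<Longrightarrow> u \<oplus>\<^bsub>G\<^esub> v \<in> D"
  using subgroup by (auto intro: additive_subgroup.a_closed)

lemma graph_in_sections_on_chain:
  assumes "D \<in> C ` Field r \<union> {carrier G}" "partial_section G E \<pi> D s"
  shows "(\<lambda>d. (d, s d)) ` D \<in> sections_on_chain"
proof -
  let ?Q = "(\<lambda>d. (d, s d)) ` D"
  have sv: "single_valued ?Q" by (auto simp: single_valued_def)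
  have "graph_app ?Q d = s d" if "d \<in> D" for d using graph_app_eq[OF sv] that by blast
  then have "partial_section G E \<pi> D (graph_app ?Q)"
    using assms member_add_closed by (simp add: partial_section_def)
  moreover have "Domain ?Q = D" by force
  ultimately show ?thesis using sv assms(1) by (simp add: sections_on_chain_def)
qed

lemma sections_on_chain_nonempty: "sections_on_chain \<noteq> {}"
proof -
  have "Field r \<noteq> {}" using union G.zero_closed by auto
  define \<alpha> where "\<alpha> = wo_rel.minim r (Field r)"
  have "\<alpha> \<in> Field r" "C \<alpha> = {\<zero>\<^bsub>G\<^esub>}"
    using wo_rel.minim_in[OF wo _ \<open>Field r \<noteq> {}\<close>] wo_rel.minim_least[OF wo, of "Field r"] bottom
    by (simp_all add: \<alpha>_def)
  moreover have "partial_section G E \<pi> {\<zero>\<^bsub>G\<^esub>} (\<lambda>_. \<zero>\<^bsub>E\<^esub>)"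
    using add_hom_zero[OF E G \<pi>] by (simp add: partial_section_def)
  ultimately show ?thesis using graph_in_sections_on_chain by blast
qed

lemma Union_chain_in_sections_on_chain:
  assumes Ch: "Ch \<in> chains sections_on_chain" "Ch \<noteq> {}"
  shows "\<Union>Ch \<in> sections_on_chain"
proof -
  have sub: "Ch \<subseteq> sections_on_chain" and chain: "\<And>Q Q'. Q \<in> Ch \<Longrightarrow> Q' \<in> Ch \<Longrightarrow> Q \<subseteq> Q' \<or> Q' \<subseteq> Q"
    using Ch by (auto simp: chains_def chain_subset_def)
  have sv: "\<And>Q. Q \<in> Ch \<Longrightarrow> single_valued Q"
    and dom: "\<And>Q. Q \<in> Ch \<Longrightarrow> Domain Q \<in> C ` Field r \<union> {carrier G}"
    and sec: "\<And>Q. Q \<in> Ch \<Longrightarrow> partial_section G E \<pi> (Domain Q) (graph_app Q)"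
    using sub by (auto simp: sections_on_chain_def)
  have sv_U: "single_valued (\<Union>Ch)"
  proof (rule single_valuedI)
    fix x y z assume "(x, y) \<in> \<Union>Ch" "(x, z) \<in> \<Union>Ch"
    then obtain Q Q' where "Q \<in> Ch" "Q' \<in> Ch" "(x, y) \<in> Q" "(x, z) \<in> Q'" by blast
    with chain[of Q Q'] sv show "y = z" by (blast dest: single_valuedD)
  qed
  have app_U: "graph_app (\<Union>Ch) d = graph_app Q d" if "Q \<in> Ch" "d \<in> Domain Q" for Q d
    using graph_app_in[OF sv that(2)] graph_app_eq[OF sv_U] that by blast
  have "Domain (\<Union>Ch) = \<Union>(Domain ` Ch)" by auto
  also have "\<dots> \<in> C ` Field r \<union> {carrier G}"
    using dom Ch(2) by (intro Union_members) auto
  finally have dom_U: "Domain (\<Union>Ch) \<in> C ` Field r \<union> {carrier G}" .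
  have "graph_app (\<Union>Ch) h \<in> carrier E \<and> \<pi> (graph_app (\<Union>Ch) h) = h"
    if h: "h \<in> Domain (\<Union>Ch)" for h
  proof -
    obtain Q where Q: "Q \<in> Ch" "h \<in> Domain Q" using h by blast
    then show ?thesis using app_U[OF Q] sec[OF Q(1)] by (simp add: partial_section_def)
  qed
  moreover have "graph_app (\<Union>Ch) (u \<oplus>\<^bsub>G\<^esub> v) = graph_app (\<Union>Ch) u \<oplus>\<^bsub>E\<^esub> graph_app (\<Union>Ch) v"
    if uv: "u \<in> Domain (\<Union>Ch)" "v \<in> Domain (\<Union>Ch)" for u v
  proof -
    obtain Q Q' where "Q \<in> Ch" "Q' \<in> Ch" "u \<in> Domain Q" "v \<in> Domain Q'" using uv by blast
    then obtain Q where Q: "Q \<in> Ch" "u \<in> Domain Q" "v \<in> Domain Q" using chain by blast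
    then have "u \<oplus>\<^bsub>G\<^esub> v \<in> Domain Q" using member_add_closed[OF dom] by blast
    then show ?thesis using Q app_U[OF Q(1)] sec[OF Q(1)] by (simp add: partial_section_def)
  qed
  ultimately have "partial_section G E \<pi> (Domain (\<Union>Ch)) (graph_app (\<Union>Ch))"
    by (simp add: partial_section_def)
  then show ?thesis using sv_U dom_U by (simp add: sections_on_chain_def)
qed

lemma exists_maximal_section_on_chain:
  "\<exists>M\<in>sections_on_chain. \<forall>Q\<in>sections_on_chain. M \<subseteq> Q \<longrightarrow> Q = M"
proof (rule Zorn_Lemma2)
  show "\<forall>Ch\<in>chains sections_on_chain. \<exists>U\<in>sections_on_chain. \<forall>Q\<in>Ch. Q \<subseteq> U"
  proof
    fix Ch assume Ch: "Ch \<in> chains sections_on_chain"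
    show "\<exists>U\<in>sections_on_chain. \<forall>Q\<in>Ch. Q \<subseteq> U"
    proof (cases "Ch = {}")
      case True
      then show ?thesis using sections_on_chain_nonempty by blast
    next
      case False
      with Ch have "\<Union>Ch \<in> sections_on_chain" by (rule Union_chain_in_sections_on_chain)
      then show ?thesis by blast
    qed
  qed
qed

theorem Eklof_section:
  assumes step: "\<And>\<alpha> \<beta> s. \<alpha> \<in> Field r \<Longrightarrow> immediate_succ r \<alpha> \<beta> \<Longrightarrow> partial_section G E \<pi> (C \<alpha>) s \<Longrightarrow>
      \<exists>s'. partial_section G E \<pi> (C \<beta>) s' \<and> (\<forall>k\<in>C \<alpha>. s' k = s k)"
  shows "\<exists>s. partial_section G E \<pi> (carrier G) s"
proof -
  obtain M where M: "M \<in> sections_on_chain"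
    and max: "\<forall>Q\<in>sections_on_chain. M \<subseteq> Q \<longrightarrow> Q = M"
    using exists_maximal_section_on_chain by blast
  then have sv: "single_valued M" and dom: "Domain M \<in> C ` Field r \<union> {carrier G}"
    and sec: "partial_section G E \<pi> (Domain M) (graph_app M)"
    by (auto simp: sections_on_chain_def)
  show ?thesis
  proof (cases "Domain M = carrier G")
    case True
    then show ?thesis using sec by auto
  next
    case False
    then obtain \<alpha> where \<alpha>: "\<alpha> \<in> Field r" "C \<alpha> = Domain M" using dom by auto
    with False have "C \<alpha> \<noteq> carrier G" by simp
    then obtain \<alpha>' \<beta> where \<alpha>': "\<alpha>' \<in> Field r" "immediate_succ r \<alpha>' \<beta>" "C \<alpha>' = Domain M"
      and grows: "\<not> C \<beta> \<subseteq> Domain M"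
      unfolding \<alpha>(2) by (rule exists_immediate_succ[OF \<alpha>(1), unfolded \<alpha>(2)])
    have "partial_section G E \<pi> (C \<alpha>') (graph_app M)" using sec \<alpha>'(3) by simp
    from step[OF \<alpha>'(1,2) this] obtain s' where s': "partial_section G E \<pi> (C \<beta>) s'"
      "\<forall>k\<in>Domain M. s' k = graph_app M k"
      using \<alpha>'(3) by auto
    have "(\<alpha>', \<beta>) \<in> r" "\<beta> \<in> Field r"
      using \<alpha>'(2) by (auto simp: immediate_succ_def aboveS_def Field_def)
    then have "(\<lambda>d. (d, s' d)) ` C \<beta> \<in> sections_on_chain" "M \<subseteq> (\<lambda>d. (d, s' d)) ` C \<beta>"
      using graph_in_sections_on_chain s'(1) graph_app_subset_graph[OF sv _ s'(2)] mono[of \<alpha>' \<beta>] \<alpha>'(3)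
      by simp_all
    then have "(\<lambda>d. (d, s' d)) ` C \<beta> = M" using max by blast
    then have "C \<beta> = Domain M" by force
    then show ?thesis using grows by simp
  qed
qed

end

end

section \<open>Ext vanishes on free modules\<close>

lemma Qring_simps [simp]:
  "carrier (Qring S) = S" "add (Qring S) = (+)" "monoid.mult (Qring S) = (*)"
  "ring.zero (Qring S) = 0" "monoid.one (Qring S) = 1"
  by (simp_all add: Qring_def)

lemma Qring_UNIV_a_inv: "a_inv (Qring UNIV) a = - a"
  unfolding a_inv_def m_inv_def by (rule the_equality) (auto simp: Qring_def)

locale rat_subring =
  fixes R :: "rat set"
  assumes subring_of_Q: "subring_of_Q R"
begin

lemma R_zero: "0 \<in> R"
  and R_one: "1 \<in> R"
  and R_add: "a \<in> R \<Longrightarrow> b \<in> R \<Longrightarrow> a + b \<in> R"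
  and R_mult: "a \<in> R \<Longrightarrow> b \<in> R \<Longrightarrow> a * b \<in> R"
  and R_uminus: "a \<in> R \<Longrightarrow> - a \<in> R"
proof -
  have "subring R (Qring UNIV)" using subring_of_Q by (simp add: subring_of_Q_def)
  then have add: "subgroup R (add_monoid (Qring UNIV))" and mult: "submonoid R (Qring UNIV)"
    by (auto simp: subring_def)
  show "0 \<in> R" using subgroup.one_closed[OF add] by simp
  show "1 \<in> R" using submonoid.one_closed[OF mult] by simp
  show "a \<in> R \<Longrightarrow> b \<in> R \<Longrightarrow> a + b \<in> R" using subgroup.m_closed[OF add] by simp
  show "a \<in> R \<Longrightarrow> b \<in> R \<Longrightarrow> a * b \<in> R" using submonoid.m_closed[OF mult] by simp
  show "a \<in> R \<Longrightarrow> - a \<in> R"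
    using subgroup.m_inv_closed[OF add] Qring_UNIV_a_inv by (metis a_inv_def)
qed

lemma R_diff: "a \<in> R \<Longrightarrow> b \<in> R \<Longrightarrow> a - b \<in> R"
  using R_add[OF _ R_uminus] by simp

lemma R_of_int: "of_int n \<in> R"
proof -
  have nat: "of_nat k \<in> R" for k by (induction k) (auto intro: R_zero R_one R_add)
  have "of_int n = (if n \<ge> 0 then of_nat (nat n) else - of_nat (nat (- n)) :: rat)" by simp
  then show ?thesis using nat R_uminus by presburger
qed

text \<open>Bezout: \<open>1/d = u * q + v\<close> when \<open>q = n/d\<close> in lowest terms and \<open>u n + v d = 1\<close>.\<close>
lemma R_inverse_denom:
  assumes q: "q \<in> R" and qo: "quotient_of q = (n, d)"
  shows "1 / of_int d \<in> R"
proof -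
  obtain u v where uv: "u * n + v * d = 1"
    using bezout_int[of n d] quotient_of_coprime[OF qo] by auto
  have d: "d > 0" using quotient_of_denom_pos[OF qo] .
  have "(of_int u * (of_int n / of_int d) + of_int v) * of_int d = (of_int (u * n + v * d) :: rat)"
    using d by (simp add: field_simps)
  then have "(of_int u * q + of_int v) * of_int d = (1 :: rat)"
    using uv quotient_of_div[OF qo] by simp
  then have "1 / of_int d = of_int u * q + (of_int v :: rat)"
    using d by (simp add: field_simps)
  then show ?thesis using R_of_int q R_add R_mult by simp
qed

end

locale rat_module = rat_subring R for R +
  fixes M :: "(rat, 'm) module"
  assumes module: "module (Qring R) M"
begin

sublocale M: abelian_group M
  using module by (simp add: module_def)

lemma smult_closed: "a \<in> R \<Longrightarrow> x \<in> carrier M \<Longrightarrow> a \<odot>\<^bsub>M\<^esub> x \<in> carrier M"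
  and smult_l_distr: "a \<in> R \<Longrightarrow> b \<in> R \<Longrightarrow> x \<in> carrier M \<Longrightarrow>
    (a + b) \<odot>\<^bsub>M\<^esub> x = a \<odot>\<^bsub>M\<^esub> x \<oplus>\<^bsub>M\<^esub> b \<odot>\<^bsub>M\<^esub> x"
  and smult_assoc: "a \<in> R \<Longrightarrow> b \<in> R \<Longrightarrow> x \<in> carrier M \<Longrightarrow> (a * b) \<odot>\<^bsub>M\<^esub> x = a \<odot>\<^bsub>M\<^esub> (b \<odot>\<^bsub>M\<^esub> x)"
  and smult_one: "x \<in> carrier M \<Longrightarrow> 1 \<odot>\<^bsub>M\<^esub> x = x"
  and smult_l_null: "x \<in> carrier M \<Longrightarrow> 0 \<odot>\<^bsub>M\<^esub> x = \<zero>\<^bsub>M\<^esub>"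
  and smult_r_null: "a \<in> R \<Longrightarrow> a \<odot>\<^bsub>M\<^esub> \<zero>\<^bsub>M\<^esub> = \<zero>\<^bsub>M\<^esub>"
  using module.smult_closed[OF module] module.smult_l_distr[OF module]
    module.smult_assoc1[OF module] module.smult_one[OF module]
    module.smult_l_null[OF module] module.smult_r_null[OF module]
  by simp_all

lemma smult_minus_one: assumes "x \<in> carrier M" shows "(- 1) \<odot>\<^bsub>M\<^esub> x = \<ominus>\<^bsub>M\<^esub> x"
proof -
  have "(- 1) \<odot>\<^bsub>M\<^esub> x \<oplus>\<^bsub>M\<^esub> x = \<zero>\<^bsub>M\<^esub>"
    using smult_l_distr[OF R_uminus[OF R_one] R_one assms] assms by (simp add: smult_one smult_l_null)
  then show ?thesis using assms smult_closed R_uminus R_one by (metis M.minus_equality)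
qed

lemma add_pow_eq_smult: assumes x: "x \<in> carrier M" shows "add_pow M (n::int) x = of_int n \<odot>\<^bsub>M\<^esub> x"
proof (induction n rule: int_induct[where k=0])
  case base
  then show ?case using x by (simp add: smult_l_null add_pow_def)
next
  case (step1 i)
  have "add_pow M (i + 1) x = add_pow M i x \<oplus>\<^bsub>M\<^esub> add_pow M (1::int) x"
    using M.add.int_pow_mult x by blast
  also have "\<dots> = of_int (i + 1) \<odot>\<^bsub>M\<^esub> x"
    using step1 x smult_l_distr[OF R_of_int R_one x] by (simp add: smult_one)
  finally show ?case .
next
  case (step2 i)
  have "add_pow M (i - 1) x = add_pow M i x \<oplus>\<^bsub>M\<^esub> add_pow M (- 1::int) x"
    using M.add.int_pow_mult[OF x, of i "-1"] by simp
  also have "\<dots> = (of_int i + - 1) \<odot>\<^bsub>M\<^esub> x"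
    using step2 x smult_minus_one M.add.int_pow_neg[OF x, of 1]
      smult_l_distr[OF R_of_int[of i] R_uminus[OF R_one] x] by simp
  finally show ?case by simp
qed

lemma smult_inverse_eq:
  assumes d: "1 / of_int d \<in> R" "d \<noteq> 0" and x: "x \<in> carrier M" and eq: "add_pow M d x = y"
  shows "x = (1 / of_int d) \<odot>\<^bsub>M\<^esub> y"
proof -
  have "(1 / of_int d) \<odot>\<^bsub>M\<^esub> y = (1 / of_int d * of_int d) \<odot>\<^bsub>M\<^esub> x"
    using eq add_pow_eq_smult[OF x] smult_assoc[OF d(1) R_of_int[of d] x] by simp
  then show ?thesis using d(2) x by (simp add: smult_one)
qed

lemma add_pow_smult_inverse:
  assumes d: "1 / of_int d \<in> R" "d \<noteq> 0" and y: "y \<in> carrier M"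
  shows "add_pow M d ((1 / of_int d) \<odot>\<^bsub>M\<^esub> y) = y"
proof -
  have "add_pow M d ((1 / of_int d) \<odot>\<^bsub>M\<^esub> y) = (of_int d * (1 / of_int d)) \<odot>\<^bsub>M\<^esub> y"
    using add_pow_eq_smult smult_closed[OF d(1) y] smult_assoc[OF R_of_int d(1) y] by metis
  then show ?thesis using d(2) y by (simp add: smult_one)
qed

end

text \<open>Both ends of the extension are uniquely divisible by the denominators of elements
  of \<open>R\<close>, hence so is the middle; this lets \<open>R\<close> act on \<open>E\<close> compatibly with \<open>\<pi>\<close>.\<close>
locale module_extension = rat_subring R for R +
  fixes F :: "(rat, 'f) module" and G :: "(rat, 'a) module" and E :: "('e, 'm) ring_scheme"
    and i :: "'a \<Rightarrow> 'e" and \<pi> :: "'e \<Rightarrow> 'f"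
  assumes F: "module (Qring R) F" and G: "module (Qring R) G" and ext: "extension G E F i \<pi>"
begin

sublocale F: rat_module R F
  by (rule rat_module.intro[OF rat_subring_axioms rat_module_axioms.intro[OF F]])
sublocale G: rat_module R G
  by (rule rat_module.intro[OF rat_subring_axioms rat_module_axioms.intro[OF G]])
sublocale E: abelian_group E using ext by (simp add: extension_def)
sublocale i: abelian_group_hom G E i
  using ext G.M.abelian_group_axioms by (auto simp: extension_def intro: add_hom_abelian_group_hom)
sublocale \<pi>: abelian_group_hom E F \<pi>
  using ext F.M.abelian_group_axioms by (auto simp: extension_def intro: add_hom_abelian_group_hom)

lemma i_inj: "inj_on i (carrier G)"
  and \<pi>_onto: "\<pi> ` carrier E = carrier F"
  and ker_\<pi>: "{e \<in> carrier E. \<pi> e = \<zero>\<^bsub>F\<^esub>} = i ` carrier G"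
  using ext by (simp_all add: extension_def)

lemma \<pi>_add_pow: "e \<in> carrier E \<Longrightarrow> \<pi> (add_pow E (n::int) e) = add_pow F n (\<pi> e)"
  and i_add_pow: "g \<in> carrier G \<Longrightarrow> i (add_pow G (n::int) g) = add_pow E n (i g)"
  using ext add_hom_int_pow[OF E.abelian_group_axioms F.M.abelian_group_axioms]
    add_hom_int_pow[OF G.M.abelian_group_axioms E.abelian_group_axioms]
  by (simp_all add: extension_def)

lemma E_add_pow_eq_zero:
  assumes d: "1 / of_int d \<in> R" "d \<noteq> 0" and x: "x \<in> carrier E" and z: "add_pow E d x = \<zero>\<^bsub>E\<^esub>"
  shows "x = \<zero>\<^bsub>E\<^esub>"
proof -
  have "add_pow F d (\<pi> x) = \<zero>\<^bsub>F\<^esub>" using \<pi>_add_pow[OF x, of d, symmetric] z by simp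
  then have "\<pi> x = \<zero>\<^bsub>F\<^esub>"
    using F.smult_inverse_eq[OF d \<pi>.hom_closed[OF x]] by (simp add: F.smult_r_null d)
  then obtain g where g: "g \<in> carrier G" "x = i g" using ker_\<pi> x by blast
  then have "i (add_pow G d g) = i \<zero>\<^bsub>G\<^esub>" using i_add_pow z by simp
  then have "add_pow G d g = \<zero>\<^bsub>G\<^esub>" using i_inj g by (simp add: inj_on_def)
  then have "g = \<zero>\<^bsub>G\<^esub>" using G.smult_inverse_eq[OF d g(1)] by (simp add: G.smult_r_null d)
  then show ?thesis using g by simp
qed

lemma E_ex1_divide:
  assumes d: "1 / of_int d \<in> R" "d \<noteq> 0" and e: "e \<in> carrier E"
  shows "\<exists>!e'. e' \<in> carrier E \<and> add_pow E d e' = e"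
proof (rule ex_ex1I)
  have "(1 / of_int d) \<odot>\<^bsub>F\<^esub> \<pi> e \<in> \<pi> ` carrier E"
    using F.smult_closed[OF d(1) \<pi>.hom_closed[OF e]] \<pi>_onto by simp
  then obtain e1 where "(1 / of_int d) \<odot>\<^bsub>F\<^esub> \<pi> e = \<pi> e1" "e1 \<in> carrier E" by (rule imageE)
  then have e1: "e1 \<in> carrier E" "\<pi> e1 = (1 / of_int d) \<odot>\<^bsub>F\<^esub> \<pi> e" by simp_all
  define x where "x = e \<ominus>\<^bsub>E\<^esub> add_pow E d e1"
  have x: "x \<in> carrier E" using e e1 by (simp add: x_def)
  have "\<pi> x = \<pi> e \<ominus>\<^bsub>F\<^esub> add_pow F d (\<pi> e1)"
    using e e1 \<pi>_add_pow[OF e1(1)] by (simp add: x_def a_minus_def)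
  then have "\<pi> x = \<zero>\<^bsub>F\<^esub>"
    using e1(2) F.add_pow_smult_inverse[OF d \<pi>.hom_closed[OF e]] by (simp add: a_minus_def F.M.r_neg e)
  then obtain g where g: "g \<in> carrier G" "x = i g" using ker_\<pi> x by blast
  define g' where "g' = (1 / of_int d) \<odot>\<^bsub>G\<^esub> g"
  have g': "g' \<in> carrier G" using G.smult_closed[OF d(1) g(1)] by (simp add: g'_def)
  have "add_pow E d (i g') = x"
    using G.add_pow_smult_inverse[OF d g(1)] i_add_pow[OF g', of d, symmetric] g by (simp add: g'_def)
  then have "add_pow E d (e1 \<oplus>\<^bsub>E\<^esub> i g') = add_pow E d e1 \<oplus>\<^bsub>E\<^esub> x"
    using E.add.int_pow_distrib[OF e1(1) i.hom_closed[OF g']] by simp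
  also have "\<dots> = e" using x e e1 by (simp add: x_def E.add_minus_cancel)
  finally have "add_pow E d (e1 \<oplus>\<^bsub>E\<^esub> i g') = e" .
  moreover have "e1 \<oplus>\<^bsub>E\<^esub> i g' \<in> carrier E" using e1 g' by simp
  ultimately show "\<exists>e'. e' \<in> carrier E \<and> add_pow E d e' = e" by blast
next
  fix x y assume x: "x \<in> carrier E \<and> add_pow E d x = e" and y: "y \<in> carrier E \<and> add_pow E d y = e"
  have "add_pow E d (x \<ominus>\<^bsub>E\<^esub> y) = add_pow E d x \<oplus>\<^bsub>E\<^esub> add_pow E d (\<ominus>\<^bsub>E\<^esub> y)"
    unfolding a_minus_def using x y by (intro E.add.int_pow_distrib) auto
  also have "\<dots> = e \<oplus>\<^bsub>E\<^esub> \<ominus>\<^bsub>E\<^esub> e" using x y E.add.int_pow_inv[of y d] by simp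
  finally have "add_pow E d (x \<ominus>\<^bsub>E\<^esub> y) = \<zero>\<^bsub>E\<^esub>" using e by (simp add: E.r_neg)
  then have "x \<ominus>\<^bsub>E\<^esub> y = \<zero>\<^bsub>E\<^esub>" using E_add_pow_eq_zero[OF d] x y by blast
  then show "x = y" using x y E.add.inv_solve_right'[of "\<zero>\<^bsub>E\<^esub>" x y] by (simp add: a_minus_def)
qed

definition E_div :: "int \<Rightarrow> 'e \<Rightarrow> 'e" where
  "E_div d e = (THE e'. e' \<in> carrier E \<and> add_pow E d e' = e)"

lemma E_div:
  assumes "1 / of_int d \<in> R" "d \<noteq> 0" "e \<in> carrier E"
  shows "E_div d e \<in> carrier E" "add_pow E d (E_div d e) = e"
  using theI'[OF E_ex1_divide[OF assms]] by (auto simp: E_div_def)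

lemma E_div_unique:
  assumes "1 / of_int d \<in> R" "d \<noteq> 0" "e \<in> carrier E" "e' \<in> carrier E" "add_pow E d e' = e"
  shows "E_div d e = e'"
  using E_ex1_divide[OF assms(1-3)] E_div[OF assms(1-3)] assms(4,5) by blast

definition E_scale :: "rat \<Rightarrow> 'e \<Rightarrow> 'e" where
  "E_scale q e = add_pow E (fst (quotient_of q)) (E_div (snd (quotient_of q)) e)"

lemma quotient_of_in_R:
  assumes "q \<in> R" "quotient_of q = (n, d)"
  shows "d > 0" "1 / of_int d \<in> R" "q = of_int n / of_int d"
  using quotient_of_denom_pos[OF assms(2)] R_inverse_denom[OF assms] quotient_of_div[OF assms(2)]
  by auto

lemma E_scale_eq:
  assumes e: "e \<in> carrier E" and q: "q \<in> R" and b: "b > 0" "1 / of_int b \<in> R"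
    and qab: "q = of_int a / of_int b"
  shows "E_scale q e = add_pow E a (E_div b e)"
proof -
  obtain n d where qo: "quotient_of q = (n, d)" by (cases "quotient_of q")
  note nd = quotient_of_in_R[OF q qo]
  have bd: "1 / of_int (b * d) \<in> R" "b * d \<noteq> 0"
    using R_mult[OF b(2) nd(2)] b nd by simp_all
  define u where "u = E_div (b * d) e"
  have u: "u \<in> carrier E" "add_pow E (b * d) u = e" using E_div[OF bd e] by (simp_all add: u_def)
  have pow_pow: "add_pow E (m::int) (add_pow E k u) = add_pow E (k * m) u" for m k
    using E.add.int_pow_pow[OF u(1)] by simp
  have div_b: "E_div b e = add_pow E d u"
    by (rule E_div_unique[OF b(2) _ e]) (use b u pow_pow in \<open>auto simp: mult.commute\<close>)
  have div_d: "E_div d e = add_pow E b u"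
    by (rule E_div_unique[OF nd(2) _ e]) (use nd u pow_pow in \<open>auto simp: mult.commute\<close>)
  have "of_int (b * n) = (of_int (d * a) :: rat)"
    using nd(3) qab b nd(1) by (simp add: field_simps)
  then have nb: "b * n = d * a" by (simp only: of_int_eq_iff)
  have "E_scale q e = add_pow E n (add_pow E b u)" using qo div_d by (simp add: E_scale_def)
  also have "\<dots> = add_pow E a (E_div b e)" using pow_pow div_b nb by simp
  finally show ?thesis .
qed

lemma E_scale_closed:
  assumes "e \<in> carrier E" "q \<in> R" shows "E_scale q e \<in> carrier E"
proof -
  obtain n d where qo: "quotient_of q = (n, d)" by (cases "quotient_of q")
  with assms show ?thesis
    using E_div(1)[OF quotient_of_in_R(2)[OF assms(2) qo]] quotient_of_in_R(1)[OF assms(2) qo]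
    by (simp add: E_scale_def)
qed

lemma E_scale_zero: "e \<in> carrier E \<Longrightarrow> E_scale 0 e = \<zero>\<^bsub>E\<^esub>"
  using E_scale_eq[of e 0 1 0] R_zero R_one by (simp add: add_pow_def)

lemma E_scale_add:
  assumes e: "e \<in> carrier E" and q: "q1 \<in> R" "q2 \<in> R"
  shows "E_scale (q1 + q2) e = E_scale q1 e \<oplus>\<^bsub>E\<^esub> E_scale q2 e"
proof -
  obtain n1 d1 where qo1: "quotient_of q1 = (n1, d1)" by (cases "quotient_of q1")
  obtain n2 d2 where qo2: "quotient_of q2 = (n2, d2)" by (cases "quotient_of q2")
  note nd1 = quotient_of_in_R[OF q(1) qo1] and nd2 = quotient_of_in_R[OF q(2) qo2]
  define b where "b = d1 * d2"
  have b: "b > 0" "1 / of_int b \<in> R" using nd1 nd2 R_mult[OF nd1(2) nd2(2)] by (simp_all add: b_def)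
  have q12: "q1 = of_int (n1 * d2) / of_int b" "q2 = of_int (n2 * d1) / of_int b"
    "q1 + q2 = of_int (n1 * d2 + n2 * d1) / of_int b"
    using nd1 nd2 by (simp_all add: b_def field_simps)
  have "E_scale (q1 + q2) e = add_pow E (n1 * d2 + n2 * d1) (E_div b e)"
    using E_scale_eq[OF e R_add[OF q] b q12(3)] .
  also have "\<dots> = add_pow E (n1 * d2) (E_div b e) \<oplus>\<^bsub>E\<^esub> add_pow E (n2 * d1) (E_div b e)"
    using E.add.int_pow_mult[OF E_div(1)[OF b(2) _ e]] b by simp
  also have "\<dots> = E_scale q1 e \<oplus>\<^bsub>E\<^esub> E_scale q2 e"
    using E_scale_eq[OF e q(1) b q12(1)] E_scale_eq[OF e q(2) b q12(2)] by simp
  finally show ?thesis .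
qed

lemma \<pi>_E_scale:
  assumes e: "e \<in> carrier E" and q: "q \<in> R"
  shows "\<pi> (E_scale q e) = q \<odot>\<^bsub>F\<^esub> \<pi> e"
proof -
  obtain n d where qo: "quotient_of q = (n, d)" by (cases "quotient_of q")
  note nd = quotient_of_in_R[OF q qo]
  have d: "d \<noteq> 0" using nd by simp
  note div = E_div[OF nd(2) d e]
  have "add_pow F d (\<pi> (E_div d e)) = \<pi> e" using div \<pi>_add_pow[OF div(1), of d, symmetric] by simp
  then have "\<pi> (E_div d e) = (1 / of_int d) \<odot>\<^bsub>F\<^esub> \<pi> e"
    using F.smult_inverse_eq[OF nd(2) d] div by simp
  then have "\<pi> (E_scale q e) = of_int n \<odot>\<^bsub>F\<^esub> ((1 / of_int d) \<odot>\<^bsub>F\<^esub> \<pi> e)"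
    using qo div \<pi>_add_pow F.add_pow_eq_smult by (simp add: E_scale_def)
  also have "\<dots> = q \<odot>\<^bsub>F\<^esub> \<pi> e"
    using F.smult_assoc[OF R_of_int nd(2), of "\<pi> e"] e nd(3) by simp
  finally show ?thesis .
qed

end

locale free_module_extension = module_extension +
  fixes W
  assumes W: "W \<subseteq> carrier F" and indep: "lin_indep R F W id" and spans: "R_spans R F W"
begin

definition basis_expansion where
  "basis_expansion y = (SOME p. finite (fst p) \<and> fst p \<subseteq> W \<and> snd p ` fst p \<subseteq> R \<and>
      y = (\<Oplus>\<^bsub>F\<^esub>u\<in>fst p. snd p u \<odot>\<^bsub>F\<^esub> u))"

definition basis_support where "basis_support y = fst (basis_expansion y)"

definition basis_coeff where
  "basis_coeff y w = (if w \<in> basis_support y then snd (basis_expansion y) w else 0)"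

lemma smult_basis_closed: "a \<in> R \<Longrightarrow> w \<in> W \<Longrightarrow> a \<odot>\<^bsub>F\<^esub> w \<in> carrier F"
  using F.smult_closed W by blast

lemma basis_expansion:
  assumes y: "y \<in> carrier F"
  shows "finite (basis_support y)" "basis_support y \<subseteq> W" "basis_coeff y w \<in> R" "w \<notin> basis_support y \<Longrightarrow> basis_coeff y w = 0"
    "y = (\<Oplus>\<^bsub>F\<^esub>u\<in>basis_support y. basis_coeff y u \<odot>\<^bsub>F\<^esub> u)"
proof -
  have "\<exists>A c. finite A \<and> A \<subseteq> W \<and> c ` A \<subseteq> R \<and> y = (\<Oplus>\<^bsub>F\<^esub>u\<in>A. c u \<odot>\<^bsub>F\<^esub> u)"
    using spans y unfolding R_spans_def by (rule bspec)
  then have "\<exists>p. finite (fst p) \<and> fst p \<subseteq> W \<and> snd p ` fst p \<subseteq> R \<and>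
      y = (\<Oplus>\<^bsub>F\<^esub>u\<in>fst p. snd p u \<odot>\<^bsub>F\<^esub> u)"
    by simp
  from someI_ex[OF this] have P: "finite (basis_support y)" "basis_support y \<subseteq> W"
    "snd (basis_expansion y) ` basis_support y \<subseteq> R"
    "y = (\<Oplus>\<^bsub>F\<^esub>u\<in>basis_support y. snd (basis_expansion y) u \<odot>\<^bsub>F\<^esub> u)"
    by (simp_all add: basis_support_def basis_expansion_def[symmetric])
  show "finite (basis_support y)" "basis_support y \<subseteq> W" by (fact P(1), fact P(2))
  show "basis_coeff y w \<in> R" using P(3) R_zero by (auto simp: basis_coeff_def)
  show "w \<notin> basis_support y \<Longrightarrow> basis_coeff y w = 0" by (simp add: basis_coeff_def)
  have "(\<Oplus>\<^bsub>F\<^esub>u\<in>basis_support y. basis_coeff y u \<odot>\<^bsub>F\<^esub> u) = (\<Oplus>\<^bsub>F\<^esub>u\<in>basis_support y. snd (basis_expansion y) u \<odot>\<^bsub>F\<^esub> u)"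
    using P(2,3) smult_basis_closed by (intro F.M.finsum_cong') (auto simp: basis_coeff_def)
  then show "y = (\<Oplus>\<^bsub>F\<^esub>u\<in>basis_support y. basis_coeff y u \<odot>\<^bsub>F\<^esub> u)" using P(4) by simp
qed

lemma basis_expansion_over:
  assumes y: "y \<in> carrier F" and V: "finite V" "basis_support y \<subseteq> V" "V \<subseteq> W"
  shows "y = (\<Oplus>\<^bsub>F\<^esub>u\<in>V. basis_coeff y u \<odot>\<^bsub>F\<^esub> u)"
proof -
  have "(\<Oplus>\<^bsub>F\<^esub>u\<in>basis_support y. basis_coeff y u \<odot>\<^bsub>F\<^esub> u) = (\<Oplus>\<^bsub>F\<^esub>u\<in>V. basis_coeff y u \<odot>\<^bsub>F\<^esub> u)"
    using basis_expansion[OF y] V F.smult_l_null W smult_basis_closed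
    by (intro F.M.add.finprod_mono_neutral_cong_left) auto
  then show ?thesis using basis_expansion(5)[OF y] by simp
qed

lemma basis_coeff_unique:
  assumes V: "finite V" "V \<subseteq> W" and a: "\<And>w. w \<in> V \<Longrightarrow> a w \<in> R" and b: "\<And>w. w \<in> V \<Longrightarrow> b w \<in> R"
    and eq: "(\<Oplus>\<^bsub>F\<^esub>u\<in>V. a u \<odot>\<^bsub>F\<^esub> u) = (\<Oplus>\<^bsub>F\<^esub>u\<in>V. b u \<odot>\<^bsub>F\<^esub> u)"
  shows "w \<in> V \<Longrightarrow> a w = b w"
proof -
  have fa: "(\<lambda>u. a u \<odot>\<^bsub>F\<^esub> u) \<in> V \<rightarrow> carrier F"
    and fb': "(\<lambda>u. b u \<odot>\<^bsub>F\<^esub> u) \<in> V \<rightarrow> carrier F"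
    and fb: "(\<lambda>u. (- 1) \<odot>\<^bsub>F\<^esub> (b u \<odot>\<^bsub>F\<^esub> u)) \<in> V \<rightarrow> carrier F"
    using a b V smult_basis_closed F.smult_closed R_uminus R_one by auto
  have "(\<Oplus>\<^bsub>F\<^esub>u\<in>V. (a u - b u) \<odot>\<^bsub>F\<^esub> u)
      = (\<Oplus>\<^bsub>F\<^esub>u\<in>V. a u \<odot>\<^bsub>F\<^esub> u \<oplus>\<^bsub>F\<^esub> (- 1) \<odot>\<^bsub>F\<^esub> (b u \<odot>\<^bsub>F\<^esub> u))"
  proof (rule F.M.finsum_cong')
    fix u assume u: "u \<in> V"
    then have R: "a u \<in> R" "- 1 \<in> R" "b u \<in> R" "u \<in> carrier F"
      using a b V W R_uminus[OF R_one] by auto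
    have "(a u - b u) \<odot>\<^bsub>F\<^esub> u = (a u + (- 1) * b u) \<odot>\<^bsub>F\<^esub> u" by simp
    also have "\<dots> = a u \<odot>\<^bsub>F\<^esub> u \<oplus>\<^bsub>F\<^esub> (- 1) \<odot>\<^bsub>F\<^esub> (b u \<odot>\<^bsub>F\<^esub> u)"
      using R by (simp only: F.smult_l_distr[OF R(1) R_mult[OF R(2,3)] R(4)] F.smult_assoc)
    finally show "(a u - b u) \<odot>\<^bsub>F\<^esub> u = a u \<odot>\<^bsub>F\<^esub> u \<oplus>\<^bsub>F\<^esub> (- 1) \<odot>\<^bsub>F\<^esub> (b u \<odot>\<^bsub>F\<^esub> u)" .
  qed (use fa fb in auto)
  also have "\<dots> = (\<Oplus>\<^bsub>F\<^esub>u\<in>V. a u \<odot>\<^bsub>F\<^esub> u) \<oplus>\<^bsub>F\<^esub> (- 1) \<odot>\<^bsub>F\<^esub> (\<Oplus>\<^bsub>F\<^esub>u\<in>V. b u \<odot>\<^bsub>F\<^esub> u)"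
    using F.M.finsum_addf[OF fa fb] module.finsum_smult_ldistr[OF F V(1) _ fb', of "- 1"]
      R_uminus[OF R_one] by simp
  also have "\<dots> = \<zero>\<^bsub>F\<^esub>"
    using eq F.smult_minus_one[OF F.M.finsum_closed[OF fb']] F.M.finsum_closed[OF fb']
    by (simp add: F.M.r_neg)
  finally have "(\<Oplus>\<^bsub>F\<^esub>u\<in>V. (\<lambda>u. a u - b u) u \<odot>\<^bsub>F\<^esub> id u) = \<zero>\<^bsub>F\<^esub>" by simp
  moreover have "(\<lambda>u. a u - b u) ` V \<subseteq> R" using a b R_diff by auto
  ultimately have "\<forall>w\<in>V. a w - b w = 0"
    using indep V unfolding lin_indep_def by blast
  then show "w \<in> V \<Longrightarrow> a w = b w" by simp
qed

definition basis_lift where "basis_lift w = (SOME e. e \<in> carrier E \<and> \<pi> e = w)"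

lemma basis_lift: assumes "w \<in> W" shows "basis_lift w \<in> carrier E" "\<pi> (basis_lift w) = w"
proof -
  have "w \<in> \<pi> ` carrier E" using assms W \<pi>_onto by auto
  then obtain e where "w = \<pi> e" "e \<in> carrier E" by (rule imageE)
  then have "\<exists>e. e \<in> carrier E \<and> \<pi> e = w" by auto
  from someI_ex[OF this] show "basis_lift w \<in> carrier E" "\<pi> (basis_lift w) = w" by (simp_all add: basis_lift_def)
qed

definition free_section where
  "free_section y = (\<Oplus>\<^bsub>E\<^esub>w\<in>basis_support y. E_scale (basis_coeff y w) (basis_lift w))"

lemma scaled_lift_closed: "w \<in> W \<Longrightarrow> q \<in> R \<Longrightarrow> E_scale q (basis_lift w) \<in> carrier E"
  using E_scale_closed basis_lift by blast

lemma free_section_over: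
  assumes y: "y \<in> carrier F" and V: "finite V" "basis_support y \<subseteq> V" "V \<subseteq> W"
  shows "free_section y = (\<Oplus>\<^bsub>E\<^esub>w\<in>V. E_scale (basis_coeff y w) (basis_lift w))"
  unfolding free_section_def
  using basis_expansion[OF y] V E_scale_zero basis_lift scaled_lift_closed
  by (intro E.add.finprod_mono_neutral_cong_left) auto

lemma free_section_closed: assumes "y \<in> carrier F" shows "free_section y \<in> carrier E"
  unfolding free_section_def using basis_expansion(2,3)[OF assms] scaled_lift_closed
  by (intro E.finsum_closed) (auto simp: subset_iff)

lemma \<pi>_free_section: assumes y: "y \<in> carrier F" shows "\<pi> (free_section y) = y"
proof -
  note exp = basis_expansion[OF y]
  have "\<pi> (free_section y) = (\<Oplus>\<^bsub>F\<^esub>w\<in>basis_support y. \<pi> (E_scale (basis_coeff y w) (basis_lift w)))"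
    unfolding free_section_def
    using ext exp scaled_lift_closed E.abelian_group_axioms F.M.abelian_group_axioms
    by (intro add_hom_finsum) (auto simp: extension_def)
  also have "\<dots> = (\<Oplus>\<^bsub>F\<^esub>w\<in>basis_support y. basis_coeff y w \<odot>\<^bsub>F\<^esub> w)"
    using exp \<pi>_E_scale basis_lift scaled_lift_closed smult_basis_closed
    by (intro F.M.finsum_cong') auto
  finally show ?thesis using exp(5) by simp
qed

lemma basis_coeff_add:
  assumes y: "y1 \<in> carrier F" "y2 \<in> carrier F"
  shows "basis_coeff (y1 \<oplus>\<^bsub>F\<^esub> y2) w = basis_coeff y1 w + basis_coeff y2 w"
proof -
  define y3 where "y3 = y1 \<oplus>\<^bsub>F\<^esub> y2"
  have y3: "y3 \<in> carrier F" using y by (simp add: y3_def)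
  note e1 = basis_expansion[OF y(1)] and e2 = basis_expansion[OF y(2)] and e3 = basis_expansion[OF y3]
  define V where "V = basis_support y1 \<union> basis_support y2 \<union> basis_support y3"
  have V: "finite V" "V \<subseteq> W" "basis_support y1 \<subseteq> V" "basis_support y2 \<subseteq> V" "basis_support y3 \<subseteq> V"
    using e1 e2 e3 by (auto simp: V_def)
  have f1: "(\<lambda>u. basis_coeff y1 u \<odot>\<^bsub>F\<^esub> u) \<in> V \<rightarrow> carrier F"
    and f2: "(\<lambda>u. basis_coeff y2 u \<odot>\<^bsub>F\<^esub> u) \<in> V \<rightarrow> carrier F"
    using e1 e2 V smult_basis_closed by auto
  have "(\<Oplus>\<^bsub>F\<^esub>u\<in>V. (basis_coeff y1 u + basis_coeff y2 u) \<odot>\<^bsub>F\<^esub> u)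
      = (\<Oplus>\<^bsub>F\<^esub>u\<in>V. basis_coeff y1 u \<odot>\<^bsub>F\<^esub> u \<oplus>\<^bsub>F\<^esub> basis_coeff y2 u \<odot>\<^bsub>F\<^esub> u)"
    using e1 e2 V W F.smult_l_distr smult_basis_closed by (intro F.M.finsum_cong') auto
  also have "\<dots> = y1 \<oplus>\<^bsub>F\<^esub> y2"
    using F.M.finsum_addf[OF f1 f2] basis_expansion_over[OF y(1) V(1,3,2)] basis_expansion_over[OF y(2) V(1,4,2)]
    by simp
  also have "\<dots> = (\<Oplus>\<^bsub>F\<^esub>u\<in>V. basis_coeff y3 u \<odot>\<^bsub>F\<^esub> u)"
    using basis_expansion_over[OF y3 V(1,5,2)] by (simp add: y3_def)
  finally have sum_eq: "(\<Oplus>\<^bsub>F\<^esub>u\<in>V. (basis_coeff y1 u + basis_coeff y2 u) \<odot>\<^bsub>F\<^esub> u)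
      = (\<Oplus>\<^bsub>F\<^esub>u\<in>V. basis_coeff y3 u \<odot>\<^bsub>F\<^esub> u)" .
  have "w \<in> V \<Longrightarrow> basis_coeff y1 w + basis_coeff y2 w \<in> R" "w \<in> V \<Longrightarrow> basis_coeff y3 w \<in> R" for w
    using e1(3) e2(3) e3(3) R_add by auto
  note basis_coeff_unique[OF V(1,2) this sum_eq]
  moreover have "w \<notin> V \<Longrightarrow> basis_coeff y3 w = basis_coeff y1 w + basis_coeff y2 w"
    using V(3-5) e1(4) e2(4) e3(4) by (metis add_0 subsetD)
  ultimately show ?thesis by (cases "w \<in> V") (simp_all add: y3_def)
qed

lemma free_section_add:
  assumes y: "y1 \<in> carrier F" "y2 \<in> carrier F"
  shows "free_section (y1 \<oplus>\<^bsub>F\<^esub> y2) = free_section y1 \<oplus>\<^bsub>E\<^esub> free_section y2"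
proof -
  define y3 where "y3 = y1 \<oplus>\<^bsub>F\<^esub> y2"
  have y3: "y3 \<in> carrier F" using y by (simp add: y3_def)
  note e1 = basis_expansion[OF y(1)] and e2 = basis_expansion[OF y(2)] and e3 = basis_expansion[OF y3]
  define V where "V = basis_support y1 \<union> basis_support y2 \<union> basis_support y3"
  have V: "finite V" "V \<subseteq> W" "basis_support y1 \<subseteq> V" "basis_support y2 \<subseteq> V" "basis_support y3 \<subseteq> V"
    using e1 e2 e3 by (auto simp: V_def)
  have scaled: "(\<lambda>w. E_scale (basis_coeff y w) (basis_lift w)) \<in> V \<rightarrow> carrier E"
    if "y \<in> carrier F" for y
    using V(2) basis_expansion(3)[OF that] scaled_lift_closed by auto
  have "free_section y3
      = (\<Oplus>\<^bsub>E\<^esub>w\<in>V. E_scale (basis_coeff y1 w) (basis_lift w) \<oplus>\<^bsub>E\<^esub> E_scale (basis_coeff y2 w) (basis_lift w))"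
    unfolding free_section_over[OF y3 V(1,5,2)]
  proof (rule E.finsum_cong')
    show "(\<lambda>w. E_scale (basis_coeff y1 w) (basis_lift w) \<oplus>\<^bsub>E\<^esub> E_scale (basis_coeff y2 w) (basis_lift w))
        \<in> V \<rightarrow> carrier E"
      using scaled[OF y(1)] scaled[OF y(2)] by (auto simp: Pi_iff)
    fix w assume "w \<in> V"
    then show "E_scale (basis_coeff y3 w) (basis_lift w)
        = E_scale (basis_coeff y1 w) (basis_lift w) \<oplus>\<^bsub>E\<^esub> E_scale (basis_coeff y2 w) (basis_lift w)"
      using basis_coeff_add[OF y] E_scale_add basis_lift V(2) e1(3) e2(3) by (auto simp: y3_def)
  qed simp
  also have "\<dots> = free_section y1 \<oplus>\<^bsub>E\<^esub> free_section y2"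
    using E.finsum_addf[OF scaled[OF y(1)] scaled[OF y(2)]] free_section_over[OF y(1) V(1,3,2)]
      free_section_over[OF y(2) V(1,4,2)] by simp
  finally show ?thesis by (simp add: y3_def)
qed

end

theorem Ext_zero_free_module:
  fixes F :: "(rat, 'f) module" and G :: "(rat, 'a) module"
  assumes "subring_of_Q R" "R_module R G" "free_R_module R F"
  shows "Ext_zero F G"
  unfolding Ext_zero_iff
proof (intro allI impI)
  fix E :: "('a \<times> 'f) ring" and i \<pi>
  assume "extension G E F i \<pi>"
  moreover obtain W where "W \<subseteq> carrier F" "lin_indep R F W id" "R_spans R F W" "R_module R F"
    using assms(3) unfolding free_R_module_def by blast
  ultimately interpret free_module_extension R F G E i \<pi> W
    using assms(1,2)
    by (intro free_module_extension.intro module_extension.intro rat_subring.intro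
        module_extension_axioms.intro free_module_extension_axioms.intro) (simp_all add: R_module_def)
  have "add_hom F E free_section"
    using free_section_closed free_section_add by (auto simp: add_hom_def)
  then show "\<exists>s. add_hom F E s \<and> (\<forall>a\<in>carrier F. \<pi> (s a) = a)"
    using \<pi>_free_section by blast
qed

section \<open>Phi-represented modules are splitters\<close>

lemma R_module_abelian_group: "R_module R M \<Longrightarrow> abelian_group M"
  unfolding R_module_def module_def by blast

lemma submodule_additive_subgroup: "submodule H R M \<Longrightarrow> additive_subgroup H M"
  by (simp add: submodule_def additive_subgroup_def)

lemma coset_map:
  fixes G :: "(rat, 'a) module"
  assumes G: "abelian_group G" and K: "additive_subgroup K G" and "K \<subseteq> H" "H \<subseteq> carrier G"
  shows coset_map_add: "u \<in> H \<Longrightarrow> v \<in> H \<Longrightarrow>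
      K +>\<^bsub>G\<^esub> (u \<oplus>\<^bsub>G\<^esub> v) = (K +>\<^bsub>G\<^esub> u) \<oplus>\<^bsub>quot_mod G H K\<^esub> (K +>\<^bsub>G\<^esub> v)"
    and coset_map_onto: "(\<lambda>h. K +>\<^bsub>G\<^esub> h) ` H = carrier (quot_mod G H K)"
    and coset_map_eq_zero: "h \<in> H \<Longrightarrow> K +>\<^bsub>G\<^esub> h = \<zero>\<^bsub>quot_mod G H K\<^esub> \<longleftrightarrow> h \<in> K"
    and quot_zero_add: "\<zero>\<^bsub>quot_mod G H K\<^esub> \<oplus>\<^bsub>quot_mod G H K\<^esub> \<zero>\<^bsub>quot_mod G H K\<^esub> = \<zero>\<^bsub>quot_mod G H K\<^esub>"
proof -
  interpret K: abelian_subgroup K G by (rule abelian_subgroupI3[OF K G])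
  show "u \<in> H \<Longrightarrow> v \<in> H \<Longrightarrow>
      K +>\<^bsub>G\<^esub> (u \<oplus>\<^bsub>G\<^esub> v) = (K +>\<^bsub>G\<^esub> u) \<oplus>\<^bsub>quot_mod G H K\<^esub> (K +>\<^bsub>G\<^esub> v)"
    using assms(4) by (simp add: quot_mod_def K.a_rcos_sum subset_iff)
  show "(\<lambda>h. K +>\<^bsub>G\<^esub> h) ` H = carrier (quot_mod G H K)" by (simp add: quot_mod_def)
  show "h \<in> H \<Longrightarrow> K +>\<^bsub>G\<^esub> h = \<zero>\<^bsub>quot_mod G H K\<^esub> \<longleftrightarrow> h \<in> K"
    using assms(4) K.a_rcos_self K.a_rcos_const by (auto simp: quot_mod_def)
  have "K +>\<^bsub>G\<^esub> \<zero>\<^bsub>G\<^esub> = K" by (simp add: K.a_rcos_const)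
  then show "\<zero>\<^bsub>quot_mod G H K\<^esub> \<oplus>\<^bsub>quot_mod G H K\<^esub> \<zero>\<^bsub>quot_mod G H K\<^esub> = \<zero>\<^bsub>quot_mod G H K\<^esub>"
    using K.a_rcos_sum[of "\<zero>\<^bsub>G\<^esub>" "\<zero>\<^bsub>G\<^esub>"] by (simp add: quot_mod_def)
qed

lemma extend_section_across_quotient:
  fixes G :: "(rat, 'a) module" and Y :: "(rat, 'c) module"
  assumes G: "abelian_group G" and ext: "extension G E G i \<pi>"
    and K: "additive_subgroup K G" and H: "additive_subgroup H G" and KH: "K \<subseteq> H"
    and s: "partial_section G E \<pi> K s"
    and Y: "abelian_group Y" and f0: "bij_betw f0 (carrier (quot_mod G H K)) (carrier Y)"
    "add_hom (quot_mod G H K) Y f0"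
    and Ext: "Ext_zero Y G"
  shows "\<exists>s'. partial_section G E \<pi> H s' \<and> (\<forall>k\<in>K. s' k = s k)"
proof -
  interpret Y: abelian_group Y by (rule Y)
  have H_carrier: "H \<subseteq> carrier G" using H additive_subgroup.a_subset by blast
  note coset_add = coset_map_add[OF G K KH H_carrier]
    and coset_onto = coset_map_onto[OF G K KH H_carrier]
    and coset_eq_zero = coset_map_eq_zero[OF G K KH H_carrier]
  define f where "f h = f0 (K +>\<^bsub>G\<^esub> h)" for h
  have in_quot: "h \<in> H \<Longrightarrow> K +>\<^bsub>G\<^esub> h \<in> carrier (quot_mod G H K)" for h
    using coset_onto by blast
  have zero_quot: "\<zero>\<^bsub>quot_mod G H K\<^esub> \<in> carrier (quot_mod G H K)"
    using coset_eq_zero in_quot K KH by (metis additive_subgroup.zero_closed subsetD)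
  have "f0 \<zero>\<^bsub>quot_mod G H K\<^esub> = f0 \<zero>\<^bsub>quot_mod G H K\<^esub> \<oplus>\<^bsub>Y\<^esub> f0 \<zero>\<^bsub>quot_mod G H K\<^esub>"
    using f0(2) zero_quot quot_zero_add[OF G K KH H_carrier] unfolding add_hom_def by metis
  then have f0_zero: "f0 \<zero>\<^bsub>quot_mod G H K\<^esub> = \<zero>\<^bsub>Y\<^esub>"
    using f0(1) zero_quot by (metis Y.l_zero Y.zero_closed Y.add.right_cancel bij_betwE)
  have "add_hom (G\<lparr>carrier := H\<rparr>) Y f"
    using f0 in_quot coset_add by (auto simp: add_hom_def f_def bij_betw_def)
  moreover have "f ` H = f0 ` ((\<lambda>h. K +>\<^bsub>G\<^esub> h) ` H)" by (simp add: f_def image_image)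
  then have "f ` H = carrier Y" using f0(1) coset_onto by (simp add: bij_betw_def)
  moreover have "f h = \<zero>\<^bsub>Y\<^esub> \<longleftrightarrow> h \<in> K" if h: "h \<in> H" for h
  proof -
    have "f h = \<zero>\<^bsub>Y\<^esub> \<longleftrightarrow> K +>\<^bsub>G\<^esub> h = \<zero>\<^bsub>quot_mod G H K\<^esub>"
      using f0(1) in_quot[OF h] zero_quot f0_zero unfolding f_def bij_betw_def inj_on_def by metis
    then show ?thesis using coset_eq_zero[OF h] by simp
  qed
  then have "{h \<in> H. f h = \<zero>\<^bsub>Y\<^esub>} = K" using KH by blast
  ultimately interpret section_extension G E i \<pi> K H s Y f
    using G ext K H KH s Y by (intro section_extension.intro)
  show ?thesis using section_extends[OF Ext] by metis
qed

lemma underS_eq: "underS r \<alpha> = {\<beta>\<in>Field r. (\<beta>, \<alpha>) \<in> r \<and> \<beta> \<noteq> \<alpha>}"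
  and aboveS_eq: "aboveS r \<alpha> = {\<beta>\<in>Field r. (\<alpha>, \<beta>) \<in> r \<and> \<alpha> \<noteq> \<beta>}"
  by (auto simp: underS_def aboveS_def Field_def)

lemma Phi_represented_continuous_chain:
  assumes "Phi_represented R \<Phi> G r C"
  shows "continuous_chain G r C"
proof -
  let ?lt = "\<lambda>a b. (a, b) \<in> r \<and> a \<noteq> b"
  have wo: "Well_order r"
    and sub: "\<forall>\<alpha>\<in>Field r. submodule (C \<alpha>) (Qring R) G"
    and mono: "\<forall>\<alpha>\<in>Field r. \<forall>\<beta>\<in>Field r. (\<alpha>, \<beta>) \<in> r \<longrightarrow> C \<alpha> \<subseteq> C \<beta>"
    and bot: "\<forall>\<alpha>\<in>Field r. (\<forall>\<beta>\<in>Field r. (\<alpha>, \<beta>) \<in> r) \<longrightarrow> C \<alpha> = {\<zero>\<^bsub>G\<^esub>}"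
    and cont: "\<forall>\<alpha>\<in>Field r. (\<exists>\<beta>\<in>Field r. ?lt \<beta> \<alpha>) \<and>
        (\<forall>\<beta>\<in>Field r. ?lt \<beta> \<alpha> \<longrightarrow> (\<exists>\<gamma>\<in>Field r. ?lt \<beta> \<gamma> \<and> ?lt \<gamma> \<alpha>))
        \<longrightarrow> C \<alpha> = (\<Union>\<beta>\<in>{\<beta>\<in>Field r. ?lt \<beta> \<alpha>}. C \<beta>)"
    and union: "(\<Union>\<alpha>\<in>Field r. C \<alpha>) = carrier G"
    using assms unfolding Phi_represented_def Let_def by simp_all
  show ?thesis
  proof (rule continuous_chain.intro)
    show "Well_order r" by (rule wo)
    show "additive_subgroup (C \<alpha>) G" if "\<alpha> \<in> Field r" for \<alpha>
      using sub that submodule_additive_subgroup by blast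
    show "C \<alpha> \<subseteq> C \<beta>" if "(\<alpha>, \<beta>) \<in> r" for \<alpha> \<beta>
      using mono that by (blast intro: FieldI1 FieldI2)
    show "C \<alpha> = {\<zero>\<^bsub>G\<^esub>}" if "\<alpha> \<in> Field r" "\<forall>\<beta>\<in>Field r. (\<alpha>, \<beta>) \<in> r" for \<alpha>
      using bot that by blast
    show "(\<Union>\<alpha>\<in>Field r. C \<alpha>) = carrier G" by (rule union)
  next
    fix \<alpha> assume \<alpha>: "\<alpha> \<in> Field r" and "underS r \<alpha> \<noteq> {}"
      and "\<forall>\<beta>\<in>underS r \<alpha>. \<exists>\<gamma>\<in>underS r \<alpha>. \<beta> \<in> underS r \<gamma>"
    then have "(\<exists>\<beta>\<in>Field r. ?lt \<beta> \<alpha>) \<and>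
        (\<forall>\<beta>\<in>Field r. ?lt \<beta> \<alpha> \<longrightarrow> (\<exists>\<gamma>\<in>Field r. ?lt \<beta> \<gamma> \<and> ?lt \<gamma> \<alpha>))"
      unfolding underS_eq by blast
    then show "C \<alpha> = (\<Union>\<beta>\<in>underS r \<alpha>. C \<beta>)" using cont \<alpha> unfolding underS_eq by blast
  qed
qed

lemma Phi_represented_quotient:
  assumes "Phi_represented R \<Phi> G r C" "\<alpha> \<in> Field r" "immediate_succ r \<alpha> \<beta>"
  shows "(\<exists>G'\<in>\<Phi>. R_iso R (quot_mod G (C \<beta>) (C \<alpha>)) G') \<or> free_R_module R (quot_mod G (C \<beta>) (C \<alpha>))"
proof -
  have "\<forall>\<alpha>\<in>Field r. \<forall>\<beta>\<in>Field r. ((\<alpha>, \<beta>) \<in> r \<and> \<alpha> \<noteq> \<beta>) \<and>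
      (\<forall>\<gamma>\<in>Field r. (\<alpha>, \<gamma>) \<in> r \<and> \<alpha> \<noteq> \<gamma> \<longrightarrow> (\<beta>, \<gamma>) \<in> r) \<longrightarrow>
      (\<exists>G'\<in>\<Phi>. R_iso R (quot_mod G (C \<beta>) (C \<alpha>)) G') \<or> free_R_module R (quot_mod G (C \<beta>) (C \<alpha>))"
    using assms(1) unfolding Phi_represented_def Let_def by simp
  moreover have "\<beta> \<in> Field r" "(\<alpha>, \<beta>) \<in> r \<and> \<alpha> \<noteq> \<beta>"
    "\<forall>\<gamma>\<in>Field r. (\<alpha>, \<gamma>) \<in> r \<and> \<alpha> \<noteq> \<gamma> \<longrightarrow> (\<beta>, \<gamma>) \<in> r"
    using assms(3) by (auto simp: immediate_succ_def aboveS_eq)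
  ultimately show ?thesis using assms(2) by blast
qed

lemma Phi_represented_extend_section:
  fixes G :: "(rat, 'a) module" and \<Phi> :: "(rat, 'c) module set"
  assumes R: "subring_of_Q R" and \<Phi>: "\<forall>G'\<in>\<Phi>. finite_rank_free_by_1 R G'"
    and G: "R_module R G" and complete: "Phi_complete \<Phi> G" and rep: "Phi_represented R \<Phi> G r C"
    and ext: "extension G E G i \<pi>"
    and \<alpha>: "\<alpha> \<in> Field r" and succ: "immediate_succ r \<alpha> \<beta>" and s: "partial_section G E \<pi> (C \<alpha>) s"
  shows "\<exists>s'. partial_section G E \<pi> (C \<beta>) s' \<and> (\<forall>k\<in>C \<alpha>. s' k = s k)"
proof -
  interpret continuous_chain G r C using rep by (rule Phi_represented_continuous_chain)
  have \<beta>: "\<beta> \<in> Field r" "(\<alpha>, \<beta>) \<in> r"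
    using succ by (auto simp: immediate_succ_def aboveS_def Field_def)
  note extend = extend_section_across_quotient[OF R_module_abelian_group[OF G] ext
      subgroup[OF \<alpha>] subgroup[OF \<beta>(1)] mono[OF \<beta>(2)] s]
  consider (Phi) G' where "G' \<in> \<Phi>" "R_iso R (quot_mod G (C \<beta>) (C \<alpha>)) G'"
    | (free) "free_R_module R (quot_mod G (C \<beta>) (C \<alpha>))"
    using Phi_represented_quotient[OF rep \<alpha> succ] by blast
  then show ?thesis
  proof cases
    case Phi
    have "R_module R G'" using \<Phi> Phi(1) unfolding finite_rank_free_by_1_def n_free_by_1_def by blast
    moreover obtain f0 where "bij_betw f0 (carrier (quot_mod G (C \<beta>) (C \<alpha>))) (carrier G')"
      "add_hom (quot_mod G (C \<beta>) (C \<alpha>)) G' f0"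
      using Phi(2) by (auto simp: R_iso_def)
    moreover have "Ext_zero G' G" using complete Phi(1) by (simp add: Phi_complete_def)
    ultimately show ?thesis by (rule extend[OF R_module_abelian_group])
  next
    case free
    then have "abelian_group (quot_mod G (C \<beta>) (C \<alpha>))"
      using R_module_abelian_group by (auto simp: free_R_module_def)
    moreover have "add_hom (quot_mod G (C \<beta>) (C \<alpha>)) (quot_mod G (C \<beta>) (C \<alpha>)) id"
      by (simp add: add_hom_def)
    ultimately show ?thesis using Ext_zero_free_module[OF R G free] extend[of _ id] by simp
  qed
qed

theorem corollary5p4:
  fixes R :: "rat set" and \<Phi> :: "(rat, 'c) module set" and G :: "(rat, 'a) module"
    and r :: "('i \<times> 'i) set" and C :: "'i \<Rightarrow> 'a set"
  assumes "subring_of_Q R"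
    and "\<forall>G'\<in>\<Phi>. finite_rank_free_by_1 R G'"
    and "R_module R G" and "torsion_free G" and "nuc G = R"
    and "Phi_complete \<Phi> G"
    and "Phi_represented R \<Phi> G r C"
  shows "splitter G"
  unfolding splitter_def Ext_zero_iff
proof (intro allI impI)
  fix E :: "('a \<times> 'a) ring" and i \<pi>
  assume ext: "extension G E G i \<pi>"
  interpret continuous_chain G r C using assms(7) by (rule Phi_represented_continuous_chain)
  have "\<exists>s. partial_section G E \<pi> (carrier G) s"
    using R_module_abelian_group[OF assms(3)] ext Phi_represented_extend_section[OF assms(1-3,6,7) ext]
    by (intro Eklof_section) (auto simp: extension_def)
  then show "\<exists>s. add_hom G E s \<and> (\<forall>a\<in>carrier G. \<pi> (s a) = a)"
    by (auto simp: partial_section_def add_hom_def)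
qed

end
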